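(* Every unit of $A(n,d,\underline{q})$ is of the form $\gamma h_1^{m_1}\cdots h_n^{m_n}$ with $\gamma\in\Bbbk^*$ and $m_1,\ldots,m_n\in\mathbb{Z}$.
   Context: Let $\Bbbk$ be a field, $n,d$ positive integers, and $\underline{q}=(q_1,\ldots,q_n)\in(\Bbbk^* )^n$ with $q_i^d\neq1$ for all $i$. Write $a_d(X)=X^d-1$. The algebra $A(n,d,\underline{q})$ is the $\Bbbk$-algebra generated by $x_i,y_i,h_i,h_i^{-1}$ ($1\le i\le n$) subject to the relations $h_ih_i^{-1}=h_i^{-1}h_i=1$, $x_ih_i=q_ih_ix_i$, $y_ih_i=q_i^{-1}h_iy_i$, $x_iy_i=a_d(q_ih_i)=(q_ih_i)^d-1$, $y_ix_i=a_d(h_i)=h_i^d-1$, and, for $i\neq j$, each of $h_i^{\pm1},x_i,y_i$ commutes with each of $h_j^{\pm1},x_j,y_j$. (Equivalently, it is the tensor product over $\Bbbk$ of the generalized Weyl algebras $\Bbbk[h_i^{\pm1}](\sigma_i,h_i^d-1)$ with $\sigma_i(h_i)=q_ih_i$.) *)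

theory Defs
  imports Main
begin

text \<open>The algebra A(n,d,q) is given by generators and relations. We model it as the
free associative algebra on the generators x_i, y_i, h_i, h_i^{-1} (1 <= i <= n),
i.e. finitely supported coefficient functions on words, modulo the two-sided ideal
generated by the defining relations.\<close>

datatype gen = Xg nat | Yg nat | Hg nat | Hig nat

fun gidx :: "gen \<Rightarrow> nat" where
  "gidx (Xg i) = i" | "gidx (Yg i) = i" | "gidx (Hg i) = i" | "gidx (Hig i) = i"

type_synonym 'k ncp = "gen list \<Rightarrow> 'k"

definition ncadd :: "'k::field ncp \<Rightarrow> 'k ncp \<Rightarrow> 'k ncp" where
  "ncadd p r = (\<lambda>w. p w + r w)"

definition ncsub :: "'k::field ncp \<Rightarrow> 'k ncp \<Rightarrow> 'k ncp" where
  "ncsub p r = (\<lambda>w. p w - r w)"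

definition ncsmul :: "'k::field \<Rightarrow> 'k ncp \<Rightarrow> 'k ncp" where
  "ncsmul c p = (\<lambda>w. c * p w)"

definition ncmul :: "'k::field ncp \<Rightarrow> 'k ncp \<Rightarrow> 'k ncp" where
  "ncmul p r = (\<lambda>w. \<Sum>k\<le>length w. p (take k w) * r (drop k w))"

definition ncone :: "'k::field ncp" where
  "ncone = (\<lambda>w. if w = [] then 1 else 0)"

definition nczero :: "'k::field ncp" where
  "nczero = (\<lambda>w. 0)"

definition ncvar :: "gen \<Rightarrow> 'k::field ncp" where
  "ncvar g = (\<lambda>w. if w = [g] then 1 else 0)"

fun ncpow :: "'k::field ncp \<Rightarrow> nat \<Rightarrow> 'k ncp" where
  "ncpow p 0 = ncone"
| "ncpow p (Suc k) = ncmul (ncpow p k) p"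

definition ncelem :: "nat \<Rightarrow> 'k::field ncp \<Rightarrow> bool" where
  "ncelem n p \<longleftrightarrow> finite {w. p w \<noteq> 0} \<and>
     (\<forall>w. p w \<noteq> 0 \<longrightarrow> (\<forall>g\<in>set w. gidx g \<in> {1..n}))"

definition gens_of :: "nat \<Rightarrow> gen set" where
  "gens_of i = {Xg i, Yg i, Hg i, Hig i}"

definition relators :: "nat \<Rightarrow> nat \<Rightarrow> (nat \<Rightarrow> 'k::field) \<Rightarrow> 'k ncp set" where
  "relators n d q =
    (\<Union>i\<in>{1..n}.
      { ncsub (ncmul (ncvar (Hg i)) (ncvar (Hig i))) ncone,
        ncsub (ncmul (ncvar (Hig i)) (ncvar (Hg i))) ncone,
        ncsub (ncmul (ncvar (Xg i)) (ncvar (Hg i)))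
              (ncsmul (q i) (ncmul (ncvar (Hg i)) (ncvar (Xg i)))),
        ncsub (ncmul (ncvar (Yg i)) (ncvar (Hg i)))
              (ncsmul (inverse (q i)) (ncmul (ncvar (Hg i)) (ncvar (Yg i)))),
        ncsub (ncmul (ncvar (Xg i)) (ncvar (Yg i)))
              (ncsub (ncpow (ncsmul (q i) (ncvar (Hg i))) d) ncone),
        ncsub (ncmul (ncvar (Yg i)) (ncvar (Xg i)))
              (ncsub (ncpow (ncvar (Hg i)) d) ncone) })
    \<union> {ncsub (ncmul (ncvar g) (ncvar g')) (ncmul (ncvar g') (ncvar g)) | g g' i j.
         i \<in> {1..n} \<and> j \<in> {1..n} \<and> i \<noteq> j \<and> g \<in> gens_of i \<and> g' \<in> gens_of j}"

inductive_set relideal :: "nat \<Rightarrow> nat \<Rightarrow> (nat \<Rightarrow> 'k::field) \<Rightarrow> 'k ncp set"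
  for n d q where
  zero: "nczero \<in> relideal n d q"
| gen: "\<lbrakk> ncelem n a; ncelem n b; r \<in> relators n d q \<rbrakk>
          \<Longrightarrow> ncmul (ncmul a r) b \<in> relideal n d q"
| add: "\<lbrakk> p \<in> relideal n d q; r \<in> relideal n d q \<rbrakk> \<Longrightarrow> ncadd p r \<in> relideal n d q"

definition Aeq :: "nat \<Rightarrow> nat \<Rightarrow> (nat \<Rightarrow> 'k::field) \<Rightarrow> 'k ncp \<Rightarrow> 'k ncp \<Rightarrow> bool" where
  "Aeq n d q p r \<longleftrightarrow> ncsub p r \<in> relideal n d q"

definition Aunit :: "nat \<Rightarrow> nat \<Rightarrow> (nat \<Rightarrow> 'k::field) \<Rightarrow> 'k ncp \<Rightarrow> bool" where
  "Aunit n d q u \<longleftrightarrow> ncelem n u \<and>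
     (\<exists>v. ncelem n v \<and> Aeq n d q (ncmul u v) ncone \<and> Aeq n d q (ncmul v u) ncone)"

definition hpow :: "nat \<Rightarrow> int \<Rightarrow> 'k::field ncp" where
  "hpow i m = (if 0 \<le> m then ncpow (ncvar (Hg i)) (nat m) else ncpow (ncvar (Hig i)) (nat (- m)))"

fun hmono :: "(nat \<Rightarrow> int) \<Rightarrow> nat \<Rightarrow> 'k::field ncp" where
  "hmono m 0 = ncone"
| "hmono m (Suc k) = ncmul (hmono m k) (hpow (Suc k) (m (Suc k)))"

end

theory Submission
  imports Defs "HOL-Library.Function_Algebras" "HOL-Library.Product_Plus"
    "HOL-Library.Product_Lexorder" "HOL-Library.Fun_Lexorder"
begin

text \<open>Every element of \<open>A(n,d,q)\<close> is congruent to a linear combination of normal words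
  \<open>\<Prod>\<^sub>i h\<^sub>i\<^bsup>m\<^sub>i\<^esup> z\<^sub>i\<^bsup>k\<^sub>i\<^esup>\<close>, where \<open>z\<^sub>i\<^bsup>k\<^esup>\<close> is \<open>x\<^sub>i\<^bsup>k\<^esup>\<close> for \<open>k \<ge> 0\<close> and
  \<open>y\<^sub>i\<^bsup>-k\<^esup>\<close> for \<open>k < 0\<close>. Sending \<open>y\<^sub>i\<close> to \<open>x\<^sub>i\<^sup>-\<^sup>1((q\<^sub>i h\<^sub>i)\<^sup>d - 1)\<close> gives a homomorphism into
  the twisted Laurent polynomial ring in the \<open>h\<^sub>i\<close> and \<open>x\<^sub>i\<close>, whose exponent group we order
  lexicographically. There the image of a normal word has lowest exponent
  \<open>(m, k)\<close> and highest exponent \<open>(m + d max(0, -k), k)\<close>, and lowest and highest exponents are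
  additive under multiplication. The image of a unit is a unit, so its lowest and highest exponents
  agree; hence a unit is a multiple of a single normal word with all \<open>k\<^sub>i \<ge> 0\<close>, and comparing
  with its inverse gives \<open>k = 0\<close>.\<close>

section \<open>Finitely supported functions\<close>

definition supp :: "('a \<Rightarrow> 'k::zero) \<Rightarrow> 'a set" where
  "supp f = {x. f x \<noteq> 0}"

definition delta :: "'a \<Rightarrow> 'a \<Rightarrow> 'k::zero_neq_one" where
  "delta u = (\<lambda>w. if w = u then 1 else 0)"

definition scale :: "'k::times \<Rightarrow> ('a \<Rightarrow> 'k) \<Rightarrow> 'a \<Rightarrow> 'k" where
  "scale c f = (\<lambda>x. c * f x)"

lemma sum_fun_apply: "(sum F S) x = (\<Sum>i\<in>S. F i x)"
  by (induction S rule: infinite_finite_induct) auto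

lemma scale_apply: "scale c f x = c * f x"
  by (simp add: scale_def)

text \<open>The pointwise application rules are kept out of the simpset: with them the simplifier
  eta-expands function-valued terms such as \<open>f + g\<close>.\<close>

lemmas fun_apply_simps = scale_apply plus_fun_apply zero_fun_apply minus_apply uminus_apply
declare plus_fun_apply [simp del] zero_fun_apply [simp del] minus_apply [simp del] uminus_apply [simp del]

context
  fixes f g :: "'a \<Rightarrow> 'k::comm_ring_1"
begin

lemma scale_add: "scale c (f + g) = scale c f + scale c g"
  by (simp add: fun_eq_iff fun_apply_simps algebra_simps)

lemma scale_diff: "scale c (f - g) = scale c f - scale c g"
  by (simp add: fun_eq_iff fun_apply_simps algebra_simps)

lemma scale_scale: "scale c (scale c' f) = scale (c * c') f"
  by (simp add: fun_eq_iff fun_apply_simps)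

lemma scale_left_distrib: "scale (c + c') f = scale c f + scale c' f"
  by (simp add: fun_eq_iff fun_apply_simps algebra_simps)

lemma scale_simps [simp]: "scale c (0 :: 'a \<Rightarrow> 'k) = 0" "scale 0 f = 0" "scale 1 f = f"
  by (simp_all add: fun_eq_iff fun_apply_simps)

lemma scale_minus_one: "scale (-1) f = - f"
  by (simp add: fun_eq_iff fun_apply_simps)

end

lemma scale_sum: "scale c (sum F S) = (\<Sum>i\<in>S. scale c (F i :: 'a \<Rightarrow> 'k::comm_semiring_0))"
  by (simp add: fun_eq_iff fun_apply_simps sum_fun_apply sum_distrib_left)

lemma supp_delta: "supp (delta u :: 'a \<Rightarrow> 'k::zero_neq_one) = {u}"
  by (auto simp: supp_def fun_apply_simps delta_def)

lemma supp_add_subset: "supp (f + g) \<subseteq> supp f \<union> supp (g :: 'a \<Rightarrow> 'k::monoid_add)"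
  by (auto simp: supp_def fun_apply_simps)

lemma supp_diff_subset: "supp (f - g) \<subseteq> supp f \<union> supp (g :: 'a \<Rightarrow> 'k::group_add)"
  by (auto simp: supp_def fun_apply_simps)

lemma supp_scale_subset: "supp (scale c f) \<subseteq> supp (f :: 'a \<Rightarrow> 'k::mult_zero)"
  by (auto simp: supp_def fun_apply_simps)

lemma supp_scale: "c \<noteq> 0 \<Longrightarrow> supp (scale c f) = supp (f :: 'a \<Rightarrow> 'k::field)"
  by (auto simp: supp_def fun_apply_simps)

lemma supp_sum_subset: "supp (sum F S) \<subseteq> (\<Union>i\<in>S. supp (F i :: 'a \<Rightarrow> 'k::comm_monoid_add))"
  by (auto simp: supp_def fun_apply_simps sum_fun_apply intro: ccontr dest: sum.neutral)

lemma finite_supp_diff: "finite (supp f) \<Longrightarrow> finite (supp g) \<Longrightarrow> finite (supp (f - g :: 'a \<Rightarrow> 'k::group_add))"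
  by (rule finite_subset[OF supp_diff_subset]) auto

lemma finite_supp_scale: "finite (supp f) \<Longrightarrow> finite (supp (scale c f :: 'a \<Rightarrow> 'k::mult_zero))"
  by (rule finite_subset[OF supp_scale_subset])

lemma finite_supp_sum:
  "(\<And>i. i \<in> S \<Longrightarrow> finite (supp (F i))) \<Longrightarrow> finite (supp (sum F S :: 'a \<Rightarrow> 'k::comm_monoid_add))"
  by (cases "finite S") (auto intro: finite_subset[OF supp_sum_subset], simp add: supp_def fun_apply_simps)

lemma finite_supp_delta: "finite (supp (delta u :: 'a \<Rightarrow> 'k::zero_neq_one))"
  by (simp add: supp_delta)

lemma delta_expansion:
  fixes f :: "'a \<Rightarrow> 'k::comm_ring_1"
  assumes "finite (supp f)"
  shows "f = (\<Sum>u\<in>supp f. scale (f u) (delta u))"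
proof
  fix w
  have "(\<Sum>u\<in>supp f. scale (f u) (delta u)) w = (\<Sum>u\<in>supp f. if w = u then f u else 0)"
    unfolding sum_fun_apply by (rule sum.cong) (auto simp: delta_def fun_apply_simps)
  also have "\<dots> = f w" using assms by (simp add: sum.delta supp_def fun_apply_simps)
  finally show "f w = (\<Sum>u\<in>supp f. scale (f u) (delta u)) w" by simp
qed

lemma sum_restrict_scale:
  assumes "finite A" "B \<subseteq> A"
  shows "(\<Sum>x\<in>A. scale (if x \<in> B then c x else 0) (F x)) = (\<Sum>x\<in>B. scale (c x) (F x :: 'a \<Rightarrow> 'k::comm_ring_1))"
  using assms by (simp add: if_distrib[where f="\<lambda>c. scale c _"] sum.If_cases Int_absorb1)

section \<open>The free algebra\<close>

lemma ncadd_eq: "ncadd p r = p + r"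
  by (simp add: ncadd_def fun_eq_iff fun_apply_simps)

lemma ncsub_eq: "ncsub p r = p - r"
  by (simp add: ncsub_def fun_eq_iff fun_apply_simps)

lemma ncsmul_eq: "ncsmul c p = scale c p"
  by (simp add: ncsmul_def scale_def)

lemma nczero_eq: "nczero = 0"
  by (simp add: nczero_def fun_eq_iff fun_apply_simps)

lemma ncone_eq: "ncone = delta []"
  by (simp add: ncone_def delta_def fun_eq_iff fun_apply_simps)

lemma ncvar_eq: "ncvar g = delta [g]"
  by (simp add: ncvar_def delta_def fun_eq_iff fun_apply_simps)

context
  fixes p p' r r' :: "'k::field ncp"
begin

lemma ncmul_add_left: "ncmul (p + p') r = ncmul p r + ncmul p' r"
  by (simp add: ncmul_def fun_eq_iff fun_apply_simps sum.distrib algebra_simps)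

lemma ncmul_add_right: "ncmul p (r + r') = ncmul p r + ncmul p r'"
  by (simp add: ncmul_def fun_eq_iff fun_apply_simps sum.distrib algebra_simps)

lemma ncmul_diff_left: "ncmul (p - p') r = ncmul p r - ncmul p' r"
  by (simp add: ncmul_def fun_eq_iff fun_apply_simps sum_subtractf algebra_simps)

lemma ncmul_diff_right: "ncmul p (r - r') = ncmul p r - ncmul p r'"
  by (simp add: ncmul_def fun_eq_iff fun_apply_simps sum_subtractf algebra_simps)

lemma ncmul_scale_left: "ncmul (scale c p) r = scale c (ncmul p r)"
  by (simp add: ncmul_def fun_eq_iff fun_apply_simps sum_distrib_left algebra_simps)

lemma ncmul_scale_right: "ncmul p (scale c r) = scale c (ncmul p r)"
  by (simp add: ncmul_def fun_eq_iff fun_apply_simps sum_distrib_left algebra_simps)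

lemma ncmul_zero [simp]: "ncmul 0 r = 0" "ncmul p 0 = 0"
  by (simp_all add: ncmul_def fun_eq_iff fun_apply_simps)

end

lemma ncmul_sum_left: "ncmul (sum F S) r = (\<Sum>i\<in>S. ncmul (F i) r)"
proof (induction S rule: infinite_finite_induct)
  case (insert x A)
  then show ?case by (simp only: sum.insert[OF insert(1,2)] ncmul_add_left insert(3))
qed simp_all

lemma ncmul_sum_right: "ncmul p (sum F S) = (\<Sum>i\<in>S. ncmul p (F i))"
proof (induction S rule: infinite_finite_induct)
  case (insert x A)
  then show ?case by (simp only: sum.insert[OF insert(1,2)] ncmul_add_right insert(3))
qed simp_all

lemma ncmul_delta: "ncmul (delta u) (delta v) = (delta (u @ v) :: 'k::field ncp)"
proof
  fix w
  have "ncmul (delta u) (delta v) w = (\<Sum>k\<le>length w. if k = length u \<and> w = u @ v then 1 else (0::'k))"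
    unfolding ncmul_def delta_def by (rule sum.cong) (auto simp: min_def)
  then show "ncmul (delta u) (delta v) w = (delta (u @ v) w :: 'k)"
    by (auto simp: delta_def)
qed

lemma ncmul_delta_Nil_left: "ncmul (delta []) p = (p :: 'k::field ncp)"
proof
  fix w
  have "ncmul (delta []) p w = (\<Sum>k\<le>length w. if k = 0 then p w else 0)"
    unfolding ncmul_def delta_def by (rule sum.cong) auto
  then show "ncmul (delta []) p w = p w" by simp
qed

lemma ncmul_delta_Nil_right: "ncmul p (delta []) = (p :: 'k::field ncp)"
proof
  fix w
  have "ncmul p (delta []) w = (\<Sum>k\<le>length w. if k = length w then p w else 0)"
    unfolding ncmul_def delta_def by (rule sum.cong) auto
  then show "ncmul p (delta []) w = p w" by simp
qed

lemma ncmul_assoc: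
  fixes p r s :: "'k::field ncp"
  assumes "finite (supp p)" "finite (supp r)" "finite (supp s)"
  shows "ncmul (ncmul p r) s = ncmul p (ncmul r s)"
  using assms
  by (subst (1 2) delta_expansion[of p], simp, subst (1 2) delta_expansion[of r], simp,
      subst (1 2) delta_expansion[of s], simp)
     (simp add: ncmul_sum_left ncmul_sum_right ncmul_scale_left ncmul_scale_right ncmul_delta scale_sum)

definition valid_words :: "nat \<Rightarrow> gen list set" where
  "valid_words n = {w. \<forall>g\<in>set w. gidx g \<in> {1..n}}"

lemma valid_words_simps [simp]:
  "[] \<in> valid_words n"
  "g # w \<in> valid_words n \<longleftrightarrow> gidx g \<in> {1..n} \<and> w \<in> valid_words n"
  "u @ v \<in> valid_words n \<longleftrightarrow> u \<in> valid_words n \<and> v \<in> valid_words n"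
  "replicate k g \<in> valid_words n \<longleftrightarrow> k = 0 \<or> gidx g \<in> {1..n}"
  "concat ws \<in> valid_words n \<longleftrightarrow> (\<forall>w\<in>set ws. w \<in> valid_words n)"
  by (auto simp: valid_words_def)

lemma ncelem_iff: "ncelem n p \<longleftrightarrow> finite (supp p) \<and> supp p \<subseteq> valid_words n"
  by (auto simp: ncelem_def supp_def fun_apply_simps valid_words_def)

lemma ncelem_finite_supp: "ncelem n p \<Longrightarrow> finite (supp p)"
  by (simp add: ncelem_iff)

lemma ncelem_supp_subset:
  "supp r \<subseteq> supp p \<union> supp p' \<Longrightarrow> ncelem n p \<Longrightarrow> ncelem n p' \<Longrightarrow> ncelem n r"
  unfolding ncelem_iff by (meson finite_UnI finite_subset le_sup_iff subset_trans)

lemma ncelem_delta: "u \<in> valid_words n \<Longrightarrow> ncelem n (delta u :: 'k::field ncp)"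
  by (simp add: ncelem_iff supp_delta)

lemma ncelem_zero: "ncelem n (0 :: 'k::field ncp)"
  by (simp add: ncelem_iff supp_def fun_apply_simps)

lemma ncelem_add: "ncelem n p \<Longrightarrow> ncelem n r \<Longrightarrow> ncelem n (p + r :: 'k::field ncp)"
  by (rule ncelem_supp_subset[OF supp_add_subset])

lemma ncelem_diff: "ncelem n p \<Longrightarrow> ncelem n r \<Longrightarrow> ncelem n (p - r :: 'k::field ncp)"
  by (rule ncelem_supp_subset[OF supp_diff_subset])

lemma ncelem_scale: "ncelem n p \<Longrightarrow> ncelem n (scale c p :: 'k::field ncp)"
  by (rule ncelem_supp_subset[of _ p p]) (auto dest: subsetD[OF supp_scale_subset])

lemma supp_ncmul_subset: "supp (ncmul p r) \<subseteq> (\<lambda>(u, v). u @ v) ` (supp p \<times> supp r)"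
proof
  fix w assume "w \<in> supp (ncmul p r)"
  then have "(\<Sum>k\<le>length w. p (take k w) * r (drop k w)) \<noteq> 0"
    by (simp add: supp_def fun_apply_simps ncmul_def)
  then obtain k where "p (take k w) * r (drop k w) \<noteq> 0"
    by (meson sum.not_neutral_contains_not_neutral)
  then show "w \<in> (\<lambda>(u, v). u @ v) ` (supp p \<times> supp r)"
    unfolding supp_def by (intro image_eqI[of _ _ "(take k w, drop k w)"]) auto
qed

lemma finite_supp_ncmul:
  "finite (supp p) \<Longrightarrow> finite (supp r) \<Longrightarrow> finite (supp (ncmul p r :: 'k::field ncp))"
  by (rule finite_subset[OF supp_ncmul_subset]) auto

lemma ncelem_ncmul:
  assumes "ncelem n p" "ncelem n r"
  shows "ncelem n (ncmul p r :: 'k::field ncp)"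
proof -
  have "(\<lambda>(u, v). u @ v) ` (supp p \<times> supp r) \<subseteq> valid_words n"
    using assms by (auto simp: ncelem_iff)
  then show ?thesis
    using supp_ncmul_subset[of p r] assms by (auto simp: ncelem_iff intro: finite_supp_ncmul)
qed

lemma ncpow_scale_delta:
  "ncpow (scale c (delta [g])) k = scale (c ^ k) (delta (replicate k g) :: 'k::field ncp)"
proof (induction k)
  case 0
  then show ?case by (simp add: ncone_eq)
next
  case (Suc k)
  have "ncpow (scale c (delta [g])) (Suc k) = ncmul (scale (c ^ k) (delta (replicate k g))) (scale c (delta [g]))"
    using Suc by simp
  also have "\<dots> = scale (c ^ Suc k) (delta (replicate (Suc k) g))"
    by (simp add: ncmul_scale_left ncmul_scale_right ncmul_delta scale_scale replicate_append_same
        mult.commute)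
  finally show ?case .
qed

lemma ncpow_delta: "ncpow (delta [g]) k = (delta (replicate k g) :: 'k::field ncp)"
  using ncpow_scale_delta[of 1 g k] by simp

lemma relator_ncelem: "r \<in> relators n d q \<Longrightarrow> ncelem n (r :: 'k::field ncp)"
  unfolding relators_def gens_of_def
  by (auto simp: ncsub_eq ncsmul_eq ncvar_eq ncone_eq ncpow_delta ncpow_scale_delta
      intro!: ncelem_diff ncelem_ncmul ncelem_scale ncelem_delta)

section \<open>The defining ideal and congruence in A(n,d,q)\<close>

lemma relideal_ncelem: "p \<in> relideal n d q \<Longrightarrow> ncelem n p"
  by (induction rule: relideal.induct)
     (auto simp: nczero_eq ncadd_eq intro: ncelem_zero ncelem_add ncelem_ncmul relator_ncelem)

lemma relideal_zero: "0 \<in> relideal n d q"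
  using relideal.zero[simplified nczero_eq] .

lemma relideal_add: "p \<in> relideal n d q \<Longrightarrow> r \<in> relideal n d q \<Longrightarrow> p + r \<in> relideal n d q"
  using relideal.add[simplified ncadd_eq] .

lemma relideal_sandwich:
  assumes "p \<in> relideal n d q" "ncelem n a" "ncelem n b"
  shows "ncmul (ncmul a p) b \<in> relideal n d q"
  using assms
proof (induction arbitrary: a b rule: relideal.induct)
  case zero
  then show ?case by (simp add: nczero_eq relideal_zero)
next
  case (gen a' b' r a b)
  have f: "finite (supp a)" "finite (supp b)" "finite (supp a')" "finite (supp b')" "finite (supp r)"
    using gen relator_ncelem ncelem_finite_supp by blast+
  have "ncmul (ncmul a (ncmul (ncmul a' r) b')) b = ncmul (ncmul (ncmul a a') r) (ncmul b' b)"
    using f by (simp add: ncmul_assoc finite_supp_ncmul)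
  then show ?case using gen by (auto intro!: relideal.gen ncelem_ncmul)
next
  case (add p r a b)
  then show ?case by (simp add: ncadd_eq ncmul_add_left ncmul_add_right relideal_add)
qed

lemma relideal_scale: "p \<in> relideal n d q \<Longrightarrow> scale c p \<in> relideal n d q"
proof (induction rule: relideal.induct)
  case zero
  then show ?case by (simp add: nczero_eq relideal_zero)
next
  case (gen a b r)
  then have "ncmul (ncmul (scale c a) r) b \<in> relideal n d q"
    by (intro relideal.gen ncelem_scale)
  then show ?case by (simp add: ncmul_scale_left)
next
  case (add p r)
  then show ?case by (simp add: ncadd_eq scale_add relideal_add)
qed

lemma relideal_diff: "p \<in> relideal n d q \<Longrightarrow> r \<in> relideal n d q \<Longrightarrow> p - r \<in> relideal n d q"
  using relideal_add[OF _ relideal_scale[of r n d q "-1"]] by (simp add: scale_minus_one)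


lemma Aeq_iff: "Aeq n d q p r \<longleftrightarrow> p - r \<in> relideal n d q"
  by (simp add: Aeq_def ncsub_eq)

lemma Aeq_refl: "Aeq n d q p p"
  by (simp add: Aeq_iff relideal_zero)

lemma Aeq_sym: "Aeq n d q p r \<Longrightarrow> Aeq n d q r p"
  using relideal_scale[of "p - r" n d q "-1"] by (simp add: Aeq_iff scale_minus_one)

lemma Aeq_trans [trans]: "Aeq n d q p r \<Longrightarrow> Aeq n d q r s \<Longrightarrow> Aeq n d q p s"
  using relideal_add[of "p - r" n d q "r - s"] by (simp add: Aeq_iff)

lemma Aeq_add:
  assumes "Aeq n d q p r" "Aeq n d q p' r'"
  shows "Aeq n d q (p + p') (r + r')"
proof -
  have "(p - r) + (p' - r') \<in> relideal n d q"
    using assms by (simp add: Aeq_iff relideal_add)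
  moreover have "(p - r) + (p' - r') = (p + p') - (r + r')"
    by (simp add: algebra_simps)
  ultimately show ?thesis by (simp add: Aeq_iff)
qed

lemma Aeq_diff:
  assumes "Aeq n d q p r" "Aeq n d q p' r'"
  shows "Aeq n d q (p - p') (r - r')"
proof -
  have "(p - r) - (p' - r') \<in> relideal n d q"
    using assms by (simp add: Aeq_iff relideal_diff)
  moreover have "(p - r) - (p' - r') = (p - p') - (r - r')"
    by (simp add: algebra_simps)
  ultimately show ?thesis by (simp add: Aeq_iff)
qed

lemma Aeq_scale: "Aeq n d q p r \<Longrightarrow> Aeq n d q (scale c p) (scale c r)"
  by (simp add: Aeq_iff scale_diff[symmetric] relideal_scale)

lemma Aeq_eq_trans [trans]: "Aeq n d q p r \<Longrightarrow> r = s \<Longrightarrow> Aeq n d q p s"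
  by simp

lemma eq_Aeq_trans [trans]: "p = r \<Longrightarrow> Aeq n d q r s \<Longrightarrow> Aeq n d q p s"
  by simp

definition sandwich :: "gen list \<Rightarrow> gen list \<Rightarrow> 'k::field ncp \<Rightarrow> 'k ncp" where
  "sandwich a b p = ncmul (ncmul (delta a) p) (delta b)"

lemma sandwich_delta: "sandwich a b (delta u) = delta (a @ u @ b)"
  by (simp add: sandwich_def ncmul_delta)

lemma sandwich_linear:
  "sandwich a b (p + r) = sandwich a b p + sandwich a b r"
  "sandwich a b (p - r) = sandwich a b p - sandwich a b r"
  "sandwich a b (scale c p) = scale c (sandwich a b p)"
  "sandwich a b (sum F S) = (\<Sum>i\<in>S. sandwich a b (F i))"
  by (simp_all add: sandwich_def ncmul_add_left ncmul_add_right ncmul_diff_left ncmul_diff_right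
      ncmul_scale_left ncmul_scale_right ncmul_sum_left ncmul_sum_right)

lemma Aeq_sandwich:
  "Aeq n d q p r \<Longrightarrow> a \<in> valid_words n \<Longrightarrow> b \<in> valid_words n
    \<Longrightarrow> Aeq n d q (sandwich a b p) (sandwich a b r)"
  using relideal_sandwich[of "p - r" n d q "delta a" "delta b"]
  by (simp add: Aeq_iff sandwich_def ncelem_delta ncmul_diff_left ncmul_diff_right)

lemma relator_Aeq_zero: "r \<in> relators n d q \<Longrightarrow> Aeq n d q r 0"
  using relideal.gen[of n "delta []" "delta []" r d q]
  by (simp add: Aeq_iff ncelem_delta ncmul_delta_Nil_left ncmul_delta_Nil_right)

section \<open>Words in normal form\<close>

definition hword :: "nat \<Rightarrow> int \<Rightarrow> gen list" where
  "hword i m = (if 0 \<le> m then replicate (nat m) (Hg i) else replicate (nat (- m)) (Hig i))"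

definition xyword :: "nat \<Rightarrow> int \<Rightarrow> gen list" where
  "xyword i k = (if 0 \<le> k then replicate (nat k) (Xg i) else replicate (nat (- k)) (Yg i))"

definition block :: "nat \<Rightarrow> int \<times> int \<Rightarrow> gen list" where
  "block i e = hword i (fst e) @ xyword i (snd e)"

lemma hword_succ: "0 \<le> m \<Longrightarrow> hword i (m + 1) = Hg i # hword i m"
  by (simp add: hword_def nat_add_distrib)

lemma hword_pred:
  assumes "m \<le> 0"
  shows "hword i (m - 1) = Hig i # hword i m"
proof -
  have "nat (- (m - 1)) = Suc (nat (- m))" using assms by arith
  then show ?thesis using assms by (auto simp: hword_def)
qed

lemma xyword_succ: "0 \<le> k \<Longrightarrow> xyword i (k + 1) = Xg i # xyword i k"
  by (simp add: xyword_def nat_add_distrib)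

lemma xyword_pred:
  assumes "k \<le> 0"
  shows "xyword i (k - 1) = Yg i # xyword i k"
proof -
  have "nat (- (k - 1)) = Suc (nat (- k))" using assms by arith
  then show ?thesis using assms by (auto simp: xyword_def)
qed

lemma gidx_block: "g \<in> set (block i e) \<Longrightarrow> gidx g = i"
  by (auto simp: block_def hword_def xyword_def split: if_splits)

lemma valid_words_hword [simp]: "i \<in> {1..n} \<Longrightarrow> hword i m \<in> valid_words n"
  by (simp add: hword_def)

lemma valid_words_xyword [simp]: "i \<in> {1..n} \<Longrightarrow> xyword i k \<in> valid_words n"
  by (simp add: xyword_def)

lemma valid_words_block [simp]: "i \<in> {1..n} \<Longrightarrow> block i e \<in> valid_words n"
  by (simp add: block_def)

section \<open>Rewriting words in A(n,d,q)\<close>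

lemma gens_of_gidx: "g \<in> gens_of (gidx g)"
  by (cases g) (auto simp: gens_of_def)

locale gwa_tensor =
  fixes n d :: nat and q :: "nat \<Rightarrow> 'k::field"
  assumes d_pos: "0 < d" and q_nonzero: "\<And>i. i \<in> {1..n} \<Longrightarrow> q i \<noteq> 0"
begin

abbreviation Aeq_rel :: "'k ncp \<Rightarrow> 'k ncp \<Rightarrow> bool" (infix "\<approx>" 50) where
  "p \<approx> r \<equiv> Aeq n d q p r"

lemma relators_Aeq: "ncsub p r \<in> relators n d q \<Longrightarrow> p \<approx> r"
  using relator_Aeq_zero[of "ncsub p r" n d q] by (simp add: Aeq_iff ncsub_eq)

lemma Aeq_delta_sandwich:
  assumes "delta u \<approx> p" "a \<in> valid_words n" "b \<in> valid_words n"
  shows "delta (a @ u @ b) \<approx> sandwich a b p"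
  using Aeq_sandwich[OF assms] by (simp add: sandwich_delta)

lemma commute_Aeq:
  assumes "gidx g \<in> {1..n}" "gidx g' \<in> {1..n}" "gidx g \<noteq> gidx g'"
  shows "delta [g, g'] \<approx> delta [g', g]"
proof (rule relators_Aeq)
  have "ncsub (ncmul (ncvar g) (ncvar g')) (ncmul (ncvar g') (ncvar g)) \<in>
    {ncsub (ncmul (ncvar g) (ncvar g')) (ncmul (ncvar g') (ncvar g)) :: 'k ncp | g g' i j.
         i \<in> {1..n} \<and> j \<in> {1..n} \<and> i \<noteq> j \<and> g \<in> gens_of i \<and> g' \<in> gens_of j}"
    using assms gens_of_gidx[of g] gens_of_gidx[of g'] by blast
  then show "ncsub (delta [g, g']) (delta [g', g]) \<in> relators n d q"
    unfolding relators_def by (simp add: ncvar_eq ncmul_delta)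
qed

lemma commute_past_word:
  assumes "gidx g \<in> {1..n}" "\<forall>g'\<in>set v. gidx g' \<in> {1..n} \<and> gidx g' \<noteq> gidx g"
    and "a \<in> valid_words n" "b \<in> valid_words n"
  shows "delta (a @ g # v @ b) \<approx> delta (a @ v @ g # b)"
  using assms(2,3)
proof (induction v arbitrary: a)
  case Nil
  then show ?case by (simp add: Aeq_refl)
next
  case (Cons g' v a)
  have "delta (a @ g # (g' # v) @ b) = delta (a @ [g, g'] @ (v @ b))"
    by simp
  also have "\<dots> \<approx> sandwich a (v @ b) (delta [g', g])"
    using Cons assms by (intro Aeq_delta_sandwich commute_Aeq) (auto simp: valid_words_def)
  also have "\<dots> = delta ((a @ [g']) @ g # v @ b)"
    by (simp add: sandwich_delta)
  also have "\<dots> \<approx> delta ((a @ [g']) @ v @ g # b)"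
    using Cons by (intro Cons.IH) auto
  finally show ?case by simp
qed

context
  fixes i assumes i: "i \<in> {1..n}"
begin

lemma Hg_Hig_Aeq: "delta [Hg i, Hig i] \<approx> delta []"
  using i by (intro relators_Aeq) (auto simp: relators_def ncvar_eq ncone_eq ncmul_delta)

lemma Hig_Hg_Aeq: "delta [Hig i, Hg i] \<approx> delta []"
  using i by (intro relators_Aeq) (auto simp: relators_def ncvar_eq ncone_eq ncmul_delta)

lemma Xg_Hg_Aeq: "delta [Xg i, Hg i] \<approx> scale (q i) (delta [Hg i, Xg i])"
  using i by (intro relators_Aeq) (auto simp: relators_def ncvar_eq ncmul_delta ncsmul_eq)

lemma Yg_Hg_Aeq: "delta [Yg i, Hg i] \<approx> scale (inverse (q i)) (delta [Hg i, Yg i])"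
  using i by (intro relators_Aeq) (auto simp: relators_def ncvar_eq ncmul_delta ncsmul_eq)

lemma Xg_Yg_Aeq: "delta [Xg i, Yg i] \<approx> scale (q i ^ d) (delta (hword i (int d))) - delta []"
proof (rule relators_Aeq)
  have "ncsub (ncmul (ncvar (Xg i)) (ncvar (Yg i)))
          (ncsub (ncpow (ncsmul (q i) (ncvar (Hg i))) d) ncone) \<in> relators n d q"
    using i by (auto simp: relators_def)
  then show "ncsub (delta [Xg i, Yg i]) (scale (q i ^ d) (delta (hword i (int d))) - delta []) \<in> relators n d q"
    by (simp add: ncvar_eq ncone_eq ncmul_delta ncsmul_eq ncsub_eq ncpow_scale_delta hword_def)
qed

lemma Yg_Xg_Aeq: "delta [Yg i, Xg i] \<approx> delta (hword i (int d)) - delta []"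
proof (rule relators_Aeq)
  have "ncsub (ncmul (ncvar (Yg i)) (ncvar (Xg i))) (ncsub (ncpow (ncvar (Hg i)) d) ncone)
          \<in> relators n d q"
    using i by (auto simp: relators_def)
  then show "ncsub (delta [Yg i, Xg i]) (delta (hword i (int d)) - delta []) \<in> relators n d q"
    by (simp add: ncvar_eq ncone_eq ncmul_delta ncsub_eq ncpow_delta hword_def)
qed

context
  fixes a b assumes ab: "a \<in> valid_words n" "b \<in> valid_words n"
begin

lemma Hg_hword: "delta (a @ Hg i # hword i m @ b) \<approx> delta (a @ hword i (m + 1) @ b)"
proof (cases "0 \<le> m")
  case True
  then show ?thesis by (simp add: hword_succ Aeq_refl)
next
  case False
  then have "delta (a @ Hg i # hword i m @ b) = delta (a @ [Hg i, Hig i] @ (hword i (m + 1) @ b))"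
    using hword_pred[of "m + 1" i] by simp
  also have "\<dots> \<approx> sandwich a (hword i (m + 1) @ b) (delta [])"
    using ab i by (intro Aeq_delta_sandwich Hg_Hig_Aeq) auto
  finally show ?thesis by (simp add: sandwich_delta)
qed

lemma Hig_hword: "delta (a @ Hig i # hword i m @ b) \<approx> delta (a @ hword i (m - 1) @ b)"
proof (cases "m \<le> 0")
  case True
  then show ?thesis by (simp add: hword_pred Aeq_refl)
next
  case False
  then have "delta (a @ Hig i # hword i m @ b) = delta (a @ [Hig i, Hg i] @ (hword i (m - 1) @ b))"
    using hword_succ[of "m - 1" i] by simp
  also have "\<dots> \<approx> sandwich a (hword i (m - 1) @ b) (delta [])"
    using ab i by (intro Aeq_delta_sandwich Hig_Hg_Aeq) auto
  finally show ?thesis by (simp add: sandwich_delta)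
qed

end

lemma hword_append:
  assumes "a \<in> valid_words n" "b \<in> valid_words n"
  shows "delta (a @ hword i m @ hword i m' @ b) \<approx> delta (a @ hword i (m + m') @ b)"
  using assms(1)
proof (induction m arbitrary: a rule: int_induct[where k = 0])
  case base
  then show ?case by (simp add: hword_def Aeq_refl)
next
  case (step1 m a)
  have "delta (a @ hword i (m + 1) @ hword i m' @ b) = delta ((a @ [Hg i]) @ hword i m @ hword i m' @ b)"
    using step1 by (simp add: hword_succ)
  also have "\<dots> \<approx> delta ((a @ [Hg i]) @ hword i (m + m') @ b)"
    using step1 i by (intro step1.IH) auto
  also have "\<dots> \<approx> delta (a @ hword i (m + m' + 1) @ b)"
    using Hg_hword step1 assms by simp
  finally show ?case by (simp add: ac_simps)
next
  case (step2 m a)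
  have "delta (a @ hword i (m - 1) @ hword i m' @ b) = delta ((a @ [Hig i]) @ hword i m @ hword i m' @ b)"
    using step2 by (simp add: hword_pred)
  also have "\<dots> \<approx> delta ((a @ [Hig i]) @ hword i (m + m') @ b)"
    using step2 i by (intro step2.IH) auto
  also have "\<dots> \<approx> delta (a @ hword i (m + m' - 1) @ b)"
    using Hig_hword step2 assms by simp
  finally show ?case by (simp add: algebra_simps)
qed

lemma swap_Hig:
  assumes r: "r \<noteq> 0" and z: "gidx z \<in> {1..n}"
    and swap: "\<And>a b. a \<in> valid_words n \<Longrightarrow> b \<in> valid_words n \<Longrightarrow>
      delta (a @ [z, Hg i] @ b) \<approx> scale r (delta (a @ [Hg i, z] @ b))"
    and ab: "a \<in> valid_words n" "b \<in> valid_words n"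
  shows "delta (a @ [z, Hig i] @ b) \<approx> scale (inverse r) (delta (a @ [Hig i, z] @ b))"
proof -
  have "delta (a @ [Hig i, Hg i] @ [z, Hig i] @ b) \<approx> sandwich a ([z, Hig i] @ b) (delta [])"
    using ab i z by (intro Aeq_delta_sandwich Hig_Hg_Aeq) auto
  then have "delta (a @ [z, Hig i] @ b) \<approx> delta ((a @ [Hig i]) @ [Hg i, z] @ Hig i # b)"
    by (simp add: sandwich_delta Aeq_sym)
  also have "\<dots> \<approx> scale (inverse r) (delta ((a @ [Hig i]) @ [z, Hg i] @ Hig i # b))"
    using Aeq_sym[OF Aeq_scale[OF swap[of "a @ [Hig i]" "Hig i # b"], of "inverse r"]] ab i z r
    by (simp add: scale_scale)
  also have "delta ((a @ [Hig i]) @ [z, Hg i] @ Hig i # b) \<approx> sandwich (a @ [Hig i, z]) b (delta [])"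
    using Aeq_delta_sandwich[OF Hg_Hig_Aeq, of "a @ [Hig i, z]" b] ab i z by simp
  then have "scale (inverse r) (delta ((a @ [Hig i]) @ [z, Hg i] @ Hig i # b))
      \<approx> scale (inverse r) (delta (a @ [Hig i, z] @ b))"
    by (simp add: sandwich_delta Aeq_scale)
  finally show ?thesis .
qed

lemma move_past_hword:
  assumes r: "r \<noteq> 0" and z: "gidx z \<in> {1..n}"
    and swap: "\<And>a b. a \<in> valid_words n \<Longrightarrow> b \<in> valid_words n \<Longrightarrow>
      delta (a @ [z, Hg i] @ b) \<approx> scale r (delta (a @ [Hg i, z] @ b))"
    and ab: "a \<in> valid_words n" "b \<in> valid_words n"
  shows "delta (a @ z # hword i m @ b) \<approx> scale (r powi m) (delta (a @ hword i m @ z # b))"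
  using ab
proof (induction m arbitrary: a rule: int_induct[where k = 0])
  case base
  then show ?case by (simp add: hword_def Aeq_refl)
next
  case (step1 m a)
  have "delta (a @ z # hword i (m + 1) @ b) = delta (a @ [z, Hg i] @ (hword i m @ b))"
    using step1 by (simp add: hword_succ)
  also have "\<dots> \<approx> scale r (delta ((a @ [Hg i]) @ z # hword i m @ b))"
    using swap[of a "hword i m @ b"] step1 i ab by simp
  also have "\<dots> \<approx> scale r (scale (r powi m) (delta ((a @ [Hg i]) @ hword i m @ z # b)))"
    using step1 i by (intro Aeq_scale step1.IH) auto
  also have "\<dots> = scale (r powi (m + 1)) (delta (a @ hword i (m + 1) @ z # b))"
    using step1 r by (simp add: scale_scale hword_succ power_int_add_1')
  finally show ?case .
next
  case (step2 m a)
  have "delta (a @ z # hword i (m - 1) @ b) = delta (a @ [z, Hig i] @ (hword i m @ b))"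
    using step2 by (simp add: hword_pred)
  also have "\<dots> \<approx> scale (inverse r) (delta ((a @ [Hig i]) @ z # hword i m @ b))"
    using swap_Hig[OF r z swap, of a "hword i m @ b"] step2 i ab by simp
  also have "\<dots> \<approx> scale (inverse r) (scale (r powi m) (delta ((a @ [Hig i]) @ hword i m @ z # b)))"
    using step2 i by (intro Aeq_scale step2.IH) auto
  also have "\<dots> = scale (r powi (m - 1)) (delta (a @ hword i (m - 1) @ z # b))"
    using step2 r by (simp add: scale_scale hword_pred power_int_diff field_simps)
  finally show ?case .
qed

lemma Xg_Hg_swap:
  "a \<in> valid_words n \<Longrightarrow> b \<in> valid_words n \<Longrightarrow>
    delta (a @ [Xg i, Hg i] @ b) \<approx> scale (q i) (delta (a @ [Hg i, Xg i] @ b))"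
  using Aeq_delta_sandwich[OF Xg_Hg_Aeq] by (simp add: sandwich_linear sandwich_delta)

lemma Yg_Hg_swap:
  "a \<in> valid_words n \<Longrightarrow> b \<in> valid_words n \<Longrightarrow>
    delta (a @ [Yg i, Hg i] @ b) \<approx> scale (inverse (q i)) (delta (a @ [Hg i, Yg i] @ b))"
  using Aeq_delta_sandwich[OF Yg_Hg_Aeq] by (simp add: sandwich_linear sandwich_delta)

context
  fixes a b assumes ab: "a \<in> valid_words n" "b \<in> valid_words n"
begin

lemma Hg_block: "delta (a @ Hg i # block i (m, k) @ b) \<approx> delta (a @ block i (m + 1, k) @ b)"
  using Hg_hword[of a "xyword i k @ b" m] ab i by (simp add: block_def)

lemma Hig_block: "delta (a @ Hig i # block i (m, k) @ b) \<approx> delta (a @ block i (m - 1, k) @ b)"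
  using Hig_hword[of a "xyword i k @ b" m] ab i by (simp add: block_def)

lemma Xg_block_nonneg:
  assumes "0 \<le> k"
  shows "delta (a @ Xg i # block i (m, k) @ b) \<approx> scale (q i powi m) (delta (a @ block i (m, k + 1) @ b))"
  using move_past_hword[OF q_nonzero[OF i] _ Xg_Hg_swap ab(1), of "xyword i k @ b" m] ab i assms
  by (simp add: block_def xyword_succ)

lemma Xg_block_neg:
  assumes "k < 0"
  shows "delta (a @ Xg i # block i (m, k) @ b) \<approx> scale (q i powi m)
    (scale (q i ^ d) (delta (a @ block i (m + int d, k + 1) @ b)) - delta (a @ block i (m, k + 1) @ b))"
proof -
  have xy: "xyword i k = Yg i # xyword i (k + 1)"
    using xyword_pred[of "k + 1" i] assms by simp
  have "delta ((a @ hword i m) @ [Xg i, Yg i] @ xyword i (k + 1) @ b)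
      \<approx> scale (q i ^ d) (delta (a @ hword i m @ hword i (int d) @ xyword i (k + 1) @ b))
        - delta (a @ block i (m, k + 1) @ b)"
    using Aeq_delta_sandwich[OF Xg_Yg_Aeq, of "a @ hword i m" "xyword i (k + 1) @ b"] ab i
    by (simp add: sandwich_linear sandwich_delta block_def)
  also have "\<dots> \<approx> scale (q i ^ d) (delta (a @ block i (m + int d, k + 1) @ b))
        - delta (a @ block i (m, k + 1) @ b)"
    using hword_append[of a "xyword i (k + 1) @ b" m "int d"] ab i
    by (intro Aeq_diff Aeq_scale Aeq_refl) (simp add: block_def)
  finally have "scale (q i powi m) (delta ((a @ hword i m) @ [Xg i, Yg i] @ xyword i (k + 1) @ b))
      \<approx> scale (q i powi m) (scale (q i ^ d) (delta (a @ block i (m + int d, k + 1) @ b))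
        - delta (a @ block i (m, k + 1) @ b))"
    by (rule Aeq_scale)
  with move_past_hword[OF q_nonzero[OF i] _ Xg_Hg_swap ab(1), of "xyword i k @ b" m] ab i
  show ?thesis by (auto simp: block_def xy intro: Aeq_trans)
qed

lemma Yg_block_nonpos:
  assumes "k \<le> 0"
  shows "delta (a @ Yg i # block i (m, k) @ b) \<approx> scale (inverse (q i) powi m) (delta (a @ block i (m, k - 1) @ b))"
  using move_past_hword[OF _ _ Yg_Hg_swap ab(1), of "xyword i k @ b" m] q_nonzero[OF i] ab i assms
  by (simp add: block_def xyword_pred)

lemma Yg_block_pos:
  assumes "0 < k"
  shows "delta (a @ Yg i # block i (m, k) @ b) \<approx> scale (inverse (q i) powi m)
    (delta (a @ block i (m + int d, k - 1) @ b) - delta (a @ block i (m, k - 1) @ b))"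
proof -
  have xy: "xyword i k = Xg i # xyword i (k - 1)"
    using xyword_succ[of "k - 1" i] assms by simp
  have "delta ((a @ hword i m) @ [Yg i, Xg i] @ xyword i (k - 1) @ b)
      \<approx> delta (a @ hword i m @ hword i (int d) @ xyword i (k - 1) @ b) - delta (a @ block i (m, k - 1) @ b)"
    using Aeq_delta_sandwich[OF Yg_Xg_Aeq, of "a @ hword i m" "xyword i (k - 1) @ b"] ab i
    by (simp add: sandwich_linear sandwich_delta block_def)
  also have "\<dots> \<approx> delta (a @ block i (m + int d, k - 1) @ b) - delta (a @ block i (m, k - 1) @ b)"
    using hword_append[of a "xyword i (k - 1) @ b" m "int d"] ab i
    by (intro Aeq_diff Aeq_refl) (simp add: block_def)
  finally have "scale (inverse (q i) powi m) (delta ((a @ hword i m) @ [Yg i, Xg i] @ xyword i (k - 1) @ b))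
      \<approx> scale (inverse (q i) powi m)
        (delta (a @ block i (m + int d, k - 1) @ b) - delta (a @ block i (m, k - 1) @ b))"
    by (rule Aeq_scale)
  with move_past_hword[OF _ _ Yg_Hg_swap ab(1), of "xyword i k @ b" m] q_nonzero[OF i] ab i
  show ?thesis by (auto simp: block_def xy intro: Aeq_trans)
qed

end

end

end

section \<open>Spanning by normal words\<close>

type_synonym exponent = "nat \<Rightarrow> int \<times> int"

context gwa_tensor
begin

definition normal_exps :: "exponent set" where
  "normal_exps = {e. \<forall>j. j \<notin> {1..n} \<longrightarrow> e j = 0}"

definition normal_word :: "exponent \<Rightarrow> gen list" where
  "normal_word e = concat (map (\<lambda>j. block j (e j)) [1..<Suc n])"

definition in_normal_span :: "'k ncp \<Rightarrow> bool" where
  "in_normal_span p \<longleftrightarrow>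
    (\<exists>K c. finite K \<and> K \<subseteq> normal_exps \<and> p \<approx> (\<Sum>e\<in>K. scale (c e) (delta (normal_word e))))"

lemma normal_word_upd:
  assumes i: "i \<in> {1..n}"
  shows "normal_word (e(i := v)) = concat (map (\<lambda>j. block j (e j)) [1..<i]) @ block i v @
    concat (map (\<lambda>j. block j (e j)) [Suc i..<Suc n])"
proof -
  have "[1..<Suc n] = [1..<i] @ [i..<Suc n]"
    using i upt_add_eq_append[of 1 i "Suc n - i"] by simp
  also have "[i..<Suc n] = i # [Suc i..<Suc n]"
    using i by (intro upt_conv_Cons) auto
  finally have split: "[1..<Suc n] = [1..<i] @ i # [Suc i..<Suc n]" .
  have "map (\<lambda>j. block j ((e(i := v)) j)) [1..<i] = map (\<lambda>j. block j (e j)) [1..<i]"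
    and "map (\<lambda>j. block j ((e(i := v)) j)) [Suc i..<Suc n] = map (\<lambda>j. block j (e j)) [Suc i..<Suc n]"
    by (auto intro: map_cong)
  then show ?thesis
    by (simp only: normal_word_def split map_append list.map concat_append concat.simps fun_upd_same)
qed

lemma normal_exps_upd: "e \<in> normal_exps \<Longrightarrow> i \<in> {1..n} \<Longrightarrow> e(i := v) \<in> normal_exps"
  by (auto simp: normal_exps_def)

lemma in_normal_span_Aeq: "p \<approx> r \<Longrightarrow> in_normal_span r \<Longrightarrow> in_normal_span p"
  unfolding in_normal_span_def by (meson Aeq_trans)

lemma in_normal_span_normal_word: "e \<in> normal_exps \<Longrightarrow> in_normal_span (delta (normal_word e))"
  unfolding in_normal_span_def by (intro exI[of _ "{e}"] exI[of _ "\<lambda>_. 1"]) (simp add: Aeq_refl)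

lemma in_normal_span_zero: "in_normal_span 0"
  unfolding in_normal_span_def by (intro exI[of _ "{}"]) (simp add: Aeq_refl)

lemma in_normal_span_add:
  assumes "in_normal_span p" "in_normal_span r"
  shows "in_normal_span (p + r)"
proof -
  obtain K1 c1 K2 c2 where
    K1: "finite K1" "K1 \<subseteq> normal_exps" "p \<approx> (\<Sum>e\<in>K1. scale (c1 e) (delta (normal_word e)))" and
    K2: "finite K2" "K2 \<subseteq> normal_exps" "r \<approx> (\<Sum>e\<in>K2. scale (c2 e) (delta (normal_word e)))"
    using assms unfolding in_normal_span_def by blast
  define c where "c e = (if e \<in> K1 then c1 e else 0) + (if e \<in> K2 then c2 e else 0)" for e
  have "(\<Sum>e\<in>K1 \<union> K2. scale (c e) (delta (normal_word e)))
      = (\<Sum>e\<in>K1. scale (c1 e) (delta (normal_word e))) + (\<Sum>e\<in>K2. scale (c2 e) (delta (normal_word e)))"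
    using K1 K2 by (simp add: c_def scale_left_distrib sum.distrib sum_restrict_scale)
  then have "p + r \<approx> (\<Sum>e\<in>K1 \<union> K2. scale (c e) (delta (normal_word e)))"
    using Aeq_add[OF K1(3) K2(3)] by simp
  then show ?thesis
    unfolding in_normal_span_def using K1 K2 by (intro exI[of _ "K1 \<union> K2"] exI[of _ c]) simp
qed

lemma in_normal_span_scale:
  assumes "in_normal_span p"
  shows "in_normal_span (scale a p)"
proof -
  obtain K c where K: "finite K" "K \<subseteq> normal_exps" "p \<approx> (\<Sum>e\<in>K. scale (c e) (delta (normal_word e)))"
    using assms unfolding in_normal_span_def by blast
  have "scale a p \<approx> (\<Sum>e\<in>K. scale (a * c e) (delta (normal_word e)))"
    using Aeq_scale[OF K(3), of a] by (simp add: scale_sum scale_scale)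
  then show ?thesis
    unfolding in_normal_span_def using K by (intro exI[of _ K] exI[of _ "\<lambda>e. a * c e"]) simp
qed

lemma in_normal_span_diff: "in_normal_span p \<Longrightarrow> in_normal_span r \<Longrightarrow> in_normal_span (p - r)"
  using in_normal_span_add[OF _ in_normal_span_scale[of r "-1"]] by (simp add: scale_minus_one)

lemma in_normal_span_sum: "(\<And>i. i \<in> S \<Longrightarrow> in_normal_span (F i)) \<Longrightarrow> in_normal_span (sum F S)"
  by (induction S rule: infinite_finite_induct) (auto intro: in_normal_span_zero in_normal_span_add)

lemma in_normal_span_gen_block:
  assumes i: "i \<in> {1..n}" and g: "gidx g = i" and ab: "a \<in> valid_words n" "b \<in> valid_words n"
    and span: "\<And>v. in_normal_span (delta (a @ block i v @ b))"
  shows "in_normal_span (delta (a @ g # block i (m, k) @ b))"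
proof (cases g)
  case Hg
  with g show ?thesis using in_normal_span_Aeq[OF Hg_block[OF i ab] span] by simp
next
  case Hig
  with g show ?thesis using in_normal_span_Aeq[OF Hig_block[OF i ab] span] by simp
next
  case Xg
  with g show ?thesis
    using in_normal_span_Aeq[OF Xg_block_nonneg[OF i ab] in_normal_span_scale[OF span]]
      in_normal_span_Aeq[OF Xg_block_neg[OF i ab]
        in_normal_span_scale[OF in_normal_span_diff[OF in_normal_span_scale[OF span] span]]]
    by (cases "0 \<le> k") simp_all
next
  case Yg
  with g show ?thesis
    using in_normal_span_Aeq[OF Yg_block_nonpos[OF i ab] in_normal_span_scale[OF span]]
      in_normal_span_Aeq[OF Yg_block_pos[OF i ab] in_normal_span_scale[OF in_normal_span_diff[OF span span]]]
    by (cases "k \<le> 0") simp_all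
qed

lemma in_normal_span_gen_normal_word:
  assumes g: "gidx g \<in> {1..n}" and e: "e \<in> normal_exps"
  shows "in_normal_span (delta (g # normal_word e))"
proof -
  define i where "i = gidx g"
  define pre where "pre = concat (map (\<lambda>j. block j (e j)) [1..<i])"
  define post where "post = concat (map (\<lambda>j. block j (e j)) [Suc i..<Suc n])"
  have i: "i \<in> {1..n}" using g by (simp add: i_def)
  have valid: "pre \<in> valid_words n" "post \<in> valid_words n"
    using i by (auto simp: pre_def post_def)
  have pre_indices: "\<forall>g'\<in>set pre. gidx g' \<in> {1..n} \<and> gidx g' \<noteq> gidx g"
    using i by (auto simp: pre_def i_def dest!: gidx_block)
  have upd: "normal_word (e(i := v)) = pre @ block i v @ post" for v
    unfolding pre_def post_def by (rule normal_word_upd[OF i])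
  have "delta (g # normal_word e) = delta ([] @ g # pre @ block i (e i) @ post)"
    using upd[of "e i"] by simp
  also have "\<dots> \<approx> delta (pre @ g # block i (fst (e i), snd (e i)) @ post)"
    using commute_past_word[OF g pre_indices, of "[]" "block i (e i) @ post"] valid i by simp
  finally show ?thesis
    using in_normal_span_gen_block[OF i _ valid, of g] in_normal_span_normal_word normal_exps_upd[OF e i]
    by (metis i_def upd in_normal_span_Aeq)
qed

lemma in_normal_span_delta: "w \<in> valid_words n \<Longrightarrow> in_normal_span (delta w)"
proof (induction w)
  case Nil
  have "normal_word 0 = []"
    by (simp add: normal_word_def block_def hword_def xyword_def fun_apply_simps)
  then show ?case
    using in_normal_span_normal_word[of 0] by (simp add: normal_exps_def fun_apply_simps)
next
  case (Cons g w)
  then obtain K c where K: "finite K" "K \<subseteq> normal_exps"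
    and w: "delta w \<approx> (\<Sum>e\<in>K. scale (c e) (delta (normal_word e)))"
    unfolding in_normal_span_def by auto
  have "delta (g # w) = sandwich [g] [] (delta w)"
    by (simp add: sandwich_delta)
  also have "\<dots> \<approx> (\<Sum>e\<in>K. scale (c e) (delta (g # normal_word e)))"
    using Aeq_sandwich[OF w, of "[g]" "[]"] Cons.prems by (simp add: sandwich_linear sandwich_delta)
  finally show ?case
    using Cons.prems K
    by (auto intro!: in_normal_span_sum in_normal_span_scale in_normal_span_gen_normal_word
        elim: in_normal_span_Aeq)
qed

lemma in_normal_span_ncelem: "ncelem n p \<Longrightarrow> in_normal_span p"
  using delta_expansion[of p]
  by (metis (no_types, lifting) in_normal_span_delta in_normal_span_scale in_normal_span_sum
      ncelem_iff subsetD)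

end

section \<open>Twisted Laurent polynomials\<close>

lemma single_zero [simp]: "(0 :: exponent)(i := (0, 0)) = 0"
  by (simp add: fun_eq_iff fun_apply_simps zero_prod_def)

lemma single_add: "0(i := a) + 0(i := b) = (0(i := a + b) :: exponent)"
  by (simp add: fun_eq_iff fun_apply_simps)

context gwa_tensor
begin

text \<open>A Laurent monomial with exponent \<open>s\<close> stands for \<open>\<Prod>\<^sub>i h\<^sub>i\<^bsup>fst (s i)\<^esup> x\<^sub>i\<^bsup>snd (s i)\<^esup>\<close>;
  \<open>twist s t\<close> is the scalar picked up when the \<open>x\<close>-powers of \<open>s\<close> are moved past the
  \<open>h\<close>-powers of \<open>t\<close>.\<close>

definition twist :: "exponent \<Rightarrow> exponent \<Rightarrow> 'k" where
  "twist s t = (\<Prod>l\<in>{1..n}. q l powi (fst (t l) * snd (s l)))"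

definition tmul :: "(exponent \<Rightarrow> 'k) \<Rightarrow> (exponent \<Rightarrow> 'k) \<Rightarrow> exponent \<Rightarrow> 'k" where
  "tmul f g = (\<lambda>r. \<Sum>s\<in>supp f. f s * g (r - s) * twist s (r - s))"

lemma twist_add_left: "twist (s + s') t = twist s t * twist s' t"
  unfolding twist_def
  by (subst prod.distrib[symmetric], rule prod.cong)
     (auto simp: fun_apply_simps distrib_left power_int_add q_nonzero)

lemma twist_add_right: "twist s (t + t') = twist s t * twist s t'"
  unfolding twist_def
  by (subst prod.distrib[symmetric], rule prod.cong)
     (auto simp: fun_apply_simps distrib_right power_int_add q_nonzero)

lemma twist_nonzero: "twist s t \<noteq> 0"
  unfolding twist_def using q_nonzero by (auto simp: power_int_eq_0_iff)

lemma twist_zero [simp]: "twist 0 t = 1" "twist s 0 = 1"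
  unfolding twist_def by (auto simp: fun_apply_simps)

lemma twist_single:
  "twist (0(i := a)) (0(j := b)) = (if i = j \<and> i \<in> {1..n} then q i powi (fst b * snd a) else 1)"
proof -
  have "twist (0(i := a)) (0(j := b)) = (\<Prod>l\<in>{1..n}. if l = i then (if i = j then q i powi (fst b * snd a) else 1) else 1)"
    unfolding twist_def by (rule prod.cong) (auto simp: fun_apply_simps)
  then show ?thesis
    by (simp add: prod.delta)
qed

lemma tmul_superset:
  assumes "finite S" "supp f \<subseteq> S"
  shows "tmul f g r = (\<Sum>s\<in>S. f s * g (r - s) * twist s (r - s))"
  unfolding tmul_def using assms by (intro sum.mono_neutral_left) (auto simp: supp_def)

lemma tmul_add_left:
  assumes "finite (supp f)" "finite (supp f')"
  shows "tmul (f + f') g = tmul f g + tmul f' g"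
proof
  fix r
  let ?S = "supp f \<union> supp f'"
  have "tmul (f + f') g r = (\<Sum>s\<in>?S. (f + f') s * g (r - s) * twist s (r - s))"
    using assms supp_add_subset[of f f'] by (intro tmul_superset) auto
  also have "\<dots> = (\<Sum>s\<in>?S. f s * g (r - s) * twist s (r - s)) + (\<Sum>s\<in>?S. f' s * g (r - s) * twist s (r - s))"
    by (simp add: fun_apply_simps sum.distrib algebra_simps)
  also have "\<dots> = tmul f g r + tmul f' g r"
    using assms tmul_superset[of ?S f g r] tmul_superset[of ?S f' g r] by auto
  finally show "tmul (f + f') g r = (tmul f g + tmul f' g) r"
    by (simp add: fun_apply_simps)
qed

lemma tmul_scale_left: "tmul (scale c f) g = scale c (tmul f g)"
proof (cases "c = 0")
  case True
  then show ?thesis by (simp add: tmul_def fun_eq_iff fun_apply_simps supp_def)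
next
  case False
  then show ?thesis
    by (simp add: tmul_def supp_scale fun_eq_iff fun_apply_simps sum_distrib_left algebra_simps)
qed

lemma tmul_diff_left:
  assumes "finite (supp f)" "finite (supp f')"
  shows "tmul (f - f') g = tmul f g - tmul f' g"
proof -
  have "tmul (f - f') g = tmul (f + scale (-1) f') g"
    by (rule arg_cong[where f="\<lambda>x. tmul x g"]) (simp add: fun_eq_iff fun_apply_simps)
  also have "\<dots> = tmul f g - tmul f' g"
    using assms by (simp add: tmul_add_left finite_supp_scale tmul_scale_left) (simp add: scale_minus_one)
  finally show ?thesis .
qed

lemma tmul_linear_right:
  "tmul f (g + g') = tmul f g + tmul f g'"
  "tmul f (g - g') = tmul f g - tmul f g'"
  "tmul f (scale c g) = scale c (tmul f g)"
  by (simp_all add: tmul_def fun_eq_iff fun_apply_simps sum.distrib sum_subtractf sum_distrib_left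
      algebra_simps)

lemma tmul_zero [simp]: "tmul 0 g = 0" "tmul f 0 = 0"
  by (simp_all add: tmul_def fun_eq_iff fun_apply_simps supp_def)

lemma tmul_sum_left:
  "(\<And>i. i \<in> S \<Longrightarrow> finite (supp (F i))) \<Longrightarrow> tmul (sum F S) g = (\<Sum>i\<in>S. tmul (F i) g)"
proof (induction S rule: infinite_finite_induct)
  case (insert x A)
  have "finite (supp (F x))" "finite (supp (sum F A))"
    using insert by (auto intro!: finite_supp_sum)
  with insert show ?case by (simp add: tmul_add_left)
qed simp_all

lemma tmul_sum_right: "tmul f (sum G S) = (\<Sum>i\<in>S. tmul f (G i))"
  by (induction S rule: infinite_finite_induct) (simp_all add: tmul_linear_right)

lemma tmul_delta_left: "tmul (delta p) g = (\<lambda>r. g (r - p) * twist p (r - p))"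
  unfolding tmul_def supp_delta by (simp add: delta_def)

lemma tmul_delta: "tmul (delta p) (delta p') = scale (twist p p') (delta (p + p'))"
proof
  fix r
  have "r - p = p' \<longleftrightarrow> r = p + p'" by (auto simp: algebra_simps)
  then show "tmul (delta p) (delta p') r = scale (twist p p') (delta (p + p')) r"
    unfolding tmul_delta_left by (auto simp: delta_def fun_apply_simps)
qed

lemma tmul_delta_zero_left: "tmul (delta 0) g = g"
  by (simp add: tmul_delta_left)

lemma tmul_expand_left:
  assumes "finite (supp f)"
  shows "tmul f g = (\<Sum>u\<in>supp f. scale (f u) (tmul (delta u) g))"
  by (subst delta_expansion[OF assms])
     (simp add: tmul_sum_left tmul_scale_left finite_supp_scale finite_supp_delta)

lemma tmul_delta_zero_right:
  assumes "finite (supp f)"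
  shows "tmul f (delta 0) = f"
  using tmul_expand_left[OF assms, of "delta 0"] delta_expansion[OF assms]
  by (simp add: tmul_delta)

lemma finite_supp_tmul:
  assumes "finite (supp f)" "finite (supp g)"
  shows "finite (supp (tmul f g))"
proof -
  have "supp (tmul f g) \<subseteq> (\<lambda>(s, t). s + t) ` (supp f \<times> supp g)"
  proof
    fix r assume "r \<in> supp (tmul f g)"
    then have "(\<Sum>s\<in>supp f. f s * g (r - s) * twist s (r - s)) \<noteq> 0"
      by (simp add: supp_def tmul_def)
    then obtain s where "s \<in> supp f" "f s * g (r - s) * twist s (r - s) \<noteq> 0"
      by (meson sum.not_neutral_contains_not_neutral)
    then show "r \<in> (\<lambda>(s, t). s + t) ` (supp f \<times> supp g)"
      by (intro image_eqI[of _ _ "(s, r - s)"]) (auto simp: supp_def)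
  qed
  then show ?thesis using assms by (auto intro: finite_subset)
qed

lemma tmul_assoc_delta:
  "tmul (tmul (delta u) (delta v)) h = tmul (delta u) (tmul (delta v) h)"
proof
  fix r
  define w where "w = r - u - v"
  have "r - (u + v) = w" "r - u - v = w" "r - u = v + w"
    by (simp_all add: w_def algebra_simps)
  then show "tmul (tmul (delta u) (delta v)) h r = tmul (delta u) (tmul (delta v) h) r"
    unfolding tmul_delta tmul_scale_left
    by (simp add: tmul_delta_left fun_apply_simps twist_add_left twist_add_right mult_ac)
qed

lemma tmul_assoc:
  assumes f: "finite (supp f)" and g: "finite (supp g)" and h: "finite (supp h)"
  shows "tmul (tmul f g) h = tmul f (tmul g h)"
proof -
  have delta_left: "tmul (tmul (delta u) g) h = tmul (delta u) (tmul g h)" for u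
  proof -
    have "tmul (tmul (delta u) g) h = (\<Sum>v\<in>supp g. scale (g v) (tmul (tmul (delta u) (delta v)) h))"
      by (subst (1) delta_expansion[OF g])
         (simp add: tmul_sum_right tmul_linear_right tmul_sum_left tmul_scale_left finite_supp_scale
           finite_supp_tmul finite_supp_delta)
    also have "\<dots> = tmul (delta u) (tmul g h)"
      by (subst (2) delta_expansion[OF g])
         (simp add: tmul_assoc_delta tmul_sum_right tmul_linear_right tmul_sum_left tmul_scale_left
           finite_supp_scale finite_supp_delta)
    finally show ?thesis .
  qed
  have "tmul (tmul f g) h = (\<Sum>u\<in>supp f. scale (f u) (tmul (tmul (delta u) g) h))"
    using tmul_expand_left[OF f, of g] g
    by (simp add: tmul_sum_left tmul_scale_left finite_supp_scale finite_supp_tmul finite_supp_delta)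
  also have "\<dots> = tmul f (tmul g h)"
    using tmul_expand_left[OF f, of "tmul g h"] by (simp add: delta_left)
  finally show ?thesis .
qed

end

section \<open>A representation of A(n,d,q) by twisted Laurent polynomials\<close>

context gwa_tensor
begin

text \<open>\<open>y\<^sub>i\<close> goes to \<open>x\<^sub>i\<^sup>-\<^sup>1((q\<^sub>i h\<^sub>i)\<^sup>d - 1)\<close>, as forced by \<open>x\<^sub>i y\<^sub>i = (q\<^sub>i h\<^sub>i)\<^sup>d - 1\<close>.\<close>

fun gen_image :: "gen \<Rightarrow> exponent \<Rightarrow> 'k" where
  "gen_image (Hg i) = delta (0(i := (1, 0)))"
| "gen_image (Hig i) = delta (0(i := (-1, 0)))"
| "gen_image (Xg i) = delta (0(i := (0, 1)))"
| "gen_image (Yg i) = delta (0(i := (int d, -1))) - delta (0(i := (0, -1)))"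

definition word_image :: "gen list \<Rightarrow> exponent \<Rightarrow> 'k" where
  "word_image w = foldr (\<lambda>g. tmul (gen_image g)) w (delta 0)"

definition rep :: "'k ncp \<Rightarrow> exponent \<Rightarrow> 'k" where
  "rep p = (\<Sum>w\<in>supp p. scale (p w) (word_image w))"

lemma finite_supp_gen_image: "finite (supp (gen_image g))"
  by (cases g) (auto intro!: finite_supp_diff finite_supp_delta)

lemma word_image_simps [simp]:
  "word_image [] = delta 0"
  "word_image (g # w) = tmul (gen_image g) (word_image w)"
  by (simp_all add: word_image_def)

lemma finite_supp_word_image: "finite (supp (word_image w))"
  by (induction w) (auto simp: finite_supp_delta intro!: finite_supp_tmul finite_supp_gen_image)

lemma word_image_append: "word_image (u @ v) = tmul (word_image u) (word_image v)"
  by (induction u) (simp_all add: tmul_delta_zero_left tmul_assoc finite_supp_gen_image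
      finite_supp_word_image)


lemma finite_supp_rep: "finite (supp (rep p))"
  unfolding rep_def
  by (intro finite_supp_sum finite_supp_scale finite_supp_word_image)

lemma rep_superset:
  assumes "finite S" "supp p \<subseteq> S"
  shows "rep p = (\<Sum>w\<in>S. scale (p w) (word_image w))"
  unfolding rep_def using assms by (intro sum.mono_neutral_left) (auto simp: supp_def)

lemma rep_delta: "rep (delta u) = word_image u"
  by (simp add: rep_def supp_delta) (simp add: delta_def)

lemma rep_zero: "rep 0 = 0"
  by (simp add: rep_def supp_def fun_apply_simps)

lemma rep_add:
  assumes "finite (supp p)" "finite (supp r)"
  shows "rep (p + r) = rep p + rep r"
proof -
  let ?S = "supp p \<union> supp r"
  have "rep (p + r) = (\<Sum>w\<in>?S. scale ((p + r) w) (word_image w))"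
    using assms supp_add_subset[of p r] by (intro rep_superset) auto
  also have "\<dots> = rep p + rep r"
    using assms rep_superset[of ?S p] rep_superset[of ?S r]
    by (simp add: fun_apply_simps scale_left_distrib sum.distrib)
  finally show ?thesis .
qed

lemma rep_scale: "rep (scale c p) = scale c (rep p)"
  by (cases "c = 0") (simp_all add: rep_zero rep_def supp_scale scale_sum scale_scale fun_apply_simps)

lemma rep_diff:
  assumes "finite (supp p)" "finite (supp r)"
  shows "rep (p - r) = rep p - rep r"
proof -
  have "rep (p - r) = rep (p + scale (-1) r)"
    by (rule arg_cong[where f=rep]) (simp add: fun_eq_iff fun_apply_simps)
  also have "\<dots> = rep p - rep r"
    using assms by (simp add: rep_add finite_supp_scale rep_scale) (simp add: scale_minus_one)
  finally show ?thesis .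
qed

lemma rep_sum: "(\<And>i. i \<in> S \<Longrightarrow> finite (supp (F i))) \<Longrightarrow> rep (sum F S) = (\<Sum>i\<in>S. rep (F i))"
proof (induction S rule: infinite_finite_induct)
  case (insert x A)
  have "finite (supp (F x))" "finite (supp (sum F A))"
    using insert by (auto intro!: finite_supp_sum)
  with insert show ?case by (simp add: rep_add)
qed (simp_all add: rep_zero)

lemma rep_ncmul:
  assumes p: "finite (supp p)" and r: "finite (supp r)"
  shows "rep (ncmul p r) = tmul (rep p) (rep r)"
proof -
  have "ncmul p r = ncmul (\<Sum>u\<in>supp p. scale (p u) (delta u)) (\<Sum>v\<in>supp r. scale (r v) (delta v))"
    using delta_expansion[OF p] delta_expansion[OF r] by (metis (no_types))
  also have "\<dots> = (\<Sum>u\<in>supp p. scale (p u) (ncmul (delta u) (\<Sum>v\<in>supp r. scale (r v) (delta v))))"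
    by (simp only: ncmul_sum_left ncmul_scale_left)
  also have "\<dots> = (\<Sum>u\<in>supp p. \<Sum>v\<in>supp r. scale (p u) (scale (r v) (delta (u @ v))))"
    by (simp only: ncmul_sum_right ncmul_scale_right ncmul_delta scale_sum)
  finally have "rep (ncmul p r) = (\<Sum>u\<in>supp p. scale (p u) (\<Sum>v\<in>supp r. scale (r v) (tmul (word_image u) (word_image v))))"
    by (simp add: rep_sum rep_scale rep_delta word_image_append finite_supp_sum finite_supp_scale
        finite_supp_delta scale_sum)
  also have "\<dots> = (\<Sum>u\<in>supp p. tmul (scale (p u) (word_image u)) (rep r))"
    by (simp only: tmul_scale_left) (simp only: rep_def[of r] tmul_sum_right tmul_linear_right(3))
  also have "\<dots> = tmul (rep p) (rep r)"
    unfolding rep_def[of p] by (rule tmul_sum_left[symmetric]) (intro finite_supp_scale finite_supp_word_image)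
  finally show ?thesis .
qed

lemma gen_image_relations:
  assumes i: "i \<in> {1..n}"
  shows "tmul (gen_image (Hg i)) (gen_image (Hig i)) = delta 0"
    and "tmul (gen_image (Hig i)) (gen_image (Hg i)) = delta 0"
    and "tmul (gen_image (Xg i)) (gen_image (Hg i)) = scale (q i) (tmul (gen_image (Hg i)) (gen_image (Xg i)))"
    and "tmul (gen_image (Yg i)) (gen_image (Hg i))
      = scale (inverse (q i)) (tmul (gen_image (Hg i)) (gen_image (Yg i)))"
    and "tmul (gen_image (Xg i)) (gen_image (Yg i)) = scale (q i ^ d) (word_image (hword i (int d))) - delta 0"
    and "tmul (gen_image (Yg i)) (gen_image (Xg i)) = word_image (hword i (int d)) - delta 0"
proof -
  have hword: "word_image (replicate k (Hg i)) = delta (0(i := (int k, 0)))" for k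
    by (induction k) (simp_all add: tmul_delta twist_single single_add i add.commute del: fun_upd_apply)
  show "tmul (gen_image (Hg i)) (gen_image (Hig i)) = delta 0"
    and "tmul (gen_image (Hig i)) (gen_image (Hg i)) = delta 0"
    and "tmul (gen_image (Xg i)) (gen_image (Hg i)) = scale (q i) (tmul (gen_image (Hg i)) (gen_image (Xg i)))"
    using i by (simp_all add: tmul_delta twist_single single_add scale_scale)
  show "tmul (gen_image (Yg i)) (gen_image (Hg i))
      = scale (inverse (q i)) (tmul (gen_image (Hg i)) (gen_image (Yg i)))"
    using i by (simp add: tmul_delta twist_single single_add scale_scale tmul_diff_left tmul_linear_right
        finite_supp_delta scale_diff power_int_minus add.commute)
  show "tmul (gen_image (Xg i)) (gen_image (Yg i)) = scale (q i ^ d) (word_image (hword i (int d))) - delta 0"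
    and "tmul (gen_image (Yg i)) (gen_image (Xg i)) = word_image (hword i (int d)) - delta 0"
    using i by (simp_all add: tmul_delta twist_single single_add tmul_diff_left tmul_linear_right
        finite_supp_delta hword_def hword power_int_of_nat)
qed

lemma gen_image_commute:
  assumes "gidx g \<noteq> gidx g'"
  shows "tmul (gen_image g) (gen_image g') = tmul (gen_image g') (gen_image g)"
  using assms
  by (cases g; cases g') (simp_all add: tmul_delta twist_single tmul_diff_left tmul_linear_right
      finite_supp_delta finite_supp_diff add.commute)


lemma rep_relator:
  assumes "r \<in> relators n d q"
  shows "rep r = 0"
  using assms unfolding relators_def
  apply (elim UnE UN_E)
  subgoal premises prems for i
    using prems(2) gen_image_relations[OF prems(1)]
    by (auto simp: ncvar_eq ncone_eq ncmul_delta ncsub_eq ncsmul_eq ncpow_scale_delta ncpow_delta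
        rep_diff rep_scale rep_delta finite_supp_delta finite_supp_scale finite_supp_diff
        tmul_delta_zero_right finite_supp_gen_image hword_def simp del: gen_image.simps)
  subgoal
    using gens_of_gidx gen_image_commute
    by (auto simp: gens_of_def ncvar_eq ncmul_delta ncsub_eq rep_diff rep_delta finite_supp_delta
        tmul_delta_zero_right finite_supp_gen_image simp del: gen_image.simps)
  done

lemma rep_relideal: "p \<in> relideal n d q \<Longrightarrow> rep p = 0"
proof (induction rule: relideal.induct)
  case zero
  then show ?case by (simp add: nczero_eq rep_zero)
next
  case (gen a b r)
  have "finite (supp a)" "finite (supp b)" "finite (supp r)"
    using gen relator_ncelem ncelem_finite_supp by blast+
  then show ?case
    using rep_relator[OF gen(3)] by (simp add: rep_ncmul finite_supp_ncmul)
next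
  case (add p r)
  then show ?case
    using relideal_ncelem[OF add(1)] relideal_ncelem[OF add(2)]
    by (simp add: ncadd_eq rep_add ncelem_finite_supp)
qed

lemma rep_Aeq:
  assumes "p \<approx> r" "finite (supp p)" "finite (supp r)"
  shows "rep p = rep r"
  using rep_relideal[of "p - r"] assms by (simp add: Aeq_iff rep_diff)

end

section \<open>Lowest and highest exponents\<close>

locale add_linorder = linorder le less
  for le :: "'e::ab_group_add \<Rightarrow> 'e \<Rightarrow> bool" and less :: "'e \<Rightarrow> 'e \<Rightarrow> bool" +
  assumes le_add_right: "le a b \<Longrightarrow> le (a + c) (b + c)"
begin

lemma le_add:
  assumes "le a b" "le c e"
  shows "le (a + c) (b + e)"
proof (rule local.order_trans)
  show "le (a + c) (b + c)"
    using assms(1) by (rule le_add_right)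
  show "le (b + c) (b + e)"
    using le_add_right[OF assms(2), of b] by (simp add: add.commute)
qed

lemma less_add:
  assumes ab: "less a b" and ce: "le c e"
  shows "less (a + c) (b + e)"
proof (rule local.less_le_trans)
  have "a + c \<noteq> b + c"
    using ab local.less_irrefl[of a] by force
  then show "less (a + c) (b + c)"
    by (rule local.le_neq_trans[OF le_add_right[OF local.less_imp_le[OF ab]]])
  show "le (b + c) (b + e)"
    using le_add_right[OF ce, of b] by (simp add: add.commute)
qed

definition lowest :: "('e \<Rightarrow> 'k::zero) \<Rightarrow> 'e \<Rightarrow> bool" where
  "lowest f p \<longleftrightarrow> f p \<noteq> 0 \<and> (\<forall>r. f r \<noteq> 0 \<longrightarrow> le p r)"

lemma lowest_unique:
  assumes "lowest f p" "lowest f p'"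
  shows "p = p'"
  using assms by (intro local.order_antisym) (simp_all add: lowest_def)

lemma lowest_delta: "lowest (delta p :: 'e \<Rightarrow> 'k::zero_neq_one) p"
  by (simp add: lowest_def delta_def)

lemma lowest_exists:
  assumes "finite (supp f)" "f \<noteq> 0"
  shows "\<exists>p. lowest f p"
proof -
  have "supp f \<noteq> {}"
    using assms(2) by (auto simp: supp_def fun_eq_iff fun_apply_simps)
  then obtain p where p: "p \<in> supp f" "\<forall>r\<in>supp f. le r p \<longrightarrow> p = r"
    using local.finite_has_minimal[OF assms(1)] by blast
  have "le p r" if "f r \<noteq> 0" for r
    using p(2) local.linear[of p r] that by (auto simp: supp_def)
  then show ?thesis
    using p(1) by (auto simp: lowest_def supp_def)
qed

lemma lowest_sum:
  fixes F :: "'a \<Rightarrow> 'e \<Rightarrow> 'k::field"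
  assumes K: "finite K" "K \<noteq> {}" and inj: "inj_on L K" and c: "\<And>\<kappa>. \<kappa> \<in> K \<Longrightarrow> c \<kappa> \<noteq> 0"
    and F: "\<And>\<kappa>. \<kappa> \<in> K \<Longrightarrow> lowest (F \<kappa>) (L \<kappa>)"
  shows "\<exists>\<kappa>0\<in>K. (\<forall>\<kappa>\<in>K. le (L \<kappa>0) (L \<kappa>)) \<and> lowest (\<Sum>\<kappa>\<in>K. scale (c \<kappa>) (F \<kappa>)) (L \<kappa>0)"
proof -
  obtain \<kappa>0 where k0: "\<kappa>0 \<in> K" "\<forall>\<kappa>\<in>K. le (L \<kappa>) (L \<kappa>0) \<longrightarrow> L \<kappa>0 = L \<kappa>"
    using local.finite_has_minimal[of "L ` K"] K by auto
  then have min: "\<forall>\<kappa>\<in>K. le (L \<kappa>0) (L \<kappa>)"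
    using local.linear by metis
  have "(\<Sum>\<kappa>\<in>K. scale (c \<kappa>) (F \<kappa>)) (L \<kappa>0) = (\<Sum>\<kappa>\<in>K. c \<kappa> * F \<kappa> (L \<kappa>0))"
    by (simp add: sum_fun_apply fun_apply_simps)
  also have "\<dots> = c \<kappa>0 * F \<kappa>0 (L \<kappa>0)"
  proof -
    have "F \<kappa> (L \<kappa>0) = 0" if "\<kappa> \<in> K - {\<kappa>0}" for \<kappa>
      using that F[of \<kappa>] min k0(1) inj local.order_antisym unfolding lowest_def inj_on_def
      by (metis DiffE insertI1)
    then have "(\<Sum>\<kappa>\<in>K - {\<kappa>0}. c \<kappa> * F \<kappa> (L \<kappa>0)) = 0"
      by simp
    then show ?thesis
      using sum.remove[OF K(1) k0(1), of "\<lambda>\<kappa>. c \<kappa> * F \<kappa> (L \<kappa>0)"] by simp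
  qed
  finally have "(\<Sum>\<kappa>\<in>K. scale (c \<kappa>) (F \<kappa>)) (L \<kappa>0) \<noteq> 0"
    using c[OF k0(1)] F[OF k0(1)] by (simp add: lowest_def)
  moreover have "le (L \<kappa>0) r" if "(\<Sum>\<kappa>\<in>K. scale (c \<kappa>) (F \<kappa>)) r \<noteq> 0" for r
  proof -
    have "(\<Sum>\<kappa>\<in>K. c \<kappa> * F \<kappa> r) \<noteq> 0"
      using that by (simp add: sum_fun_apply fun_apply_simps)
    then obtain \<kappa> where "\<kappa> \<in> K" "F \<kappa> r \<noteq> 0"
      by (metis (mono_tags, lifting) mult_not_zero sum.neutral)
    then show ?thesis
      using F min unfolding lowest_def by (meson local.order_trans)
  qed
  ultimately show ?thesis
    using k0(1) min by (auto simp: lowest_def)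
qed

end

context gwa_tensor
begin

lemma lowest_tmul:
  fixes le lt :: "exponent \<Rightarrow> exponent \<Rightarrow> bool"
  assumes "add_linorder le lt"
    and f: "add_linorder.lowest le f p" "finite (supp f)" and g: "add_linorder.lowest le g p'"
  shows "add_linorder.lowest le (tmul f g) (p + p')"
proof -
  interpret ord: add_linorder le lt by fact
  have "tmul f g (p + p') = f p * g p' * twist p p'"
  proof -
    have "f s * g (p + p' - s) = 0" if "s \<noteq> p" for s
    proof (rule ccontr)
      assume "f s * g (p + p' - s) \<noteq> 0"
      then have "le p s" "le p' (p + p' - s)"
        using f g by (auto simp: ord.lowest_def)
      then have "lt (p + p') (s + (p + p' - s))"
        using \<open>s \<noteq> p\<close> by (intro ord.less_add ord.le_neq_trans) auto
      then show False by simp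
    qed
    then have "tmul f g (p + p') = (\<Sum>s\<in>supp f. if s = p then f p * g p' * twist p p' else 0)"
      unfolding tmul_def by (intro sum.cong) auto
    then show ?thesis
      using f by (simp add: ord.lowest_def supp_def)
  qed
  then have "tmul f g (p + p') \<noteq> 0"
    using f g by (simp add: ord.lowest_def twist_nonzero)
  moreover have "le (p + p') r" if "tmul f g r \<noteq> 0" for r
  proof -
    have "(\<Sum>s\<in>supp f. f s * g (r - s) * twist s (r - s)) \<noteq> 0"
      using that by (simp add: tmul_def)
    then obtain s where "f s \<noteq> 0" "g (r - s) \<noteq> 0"
      by (metis (no_types, lifting) mult_not_zero sum.neutral)
    then have "le (p + p') (s + (r - s))"
      using f g by (intro ord.le_add) (auto simp: ord.lowest_def)
    then show ?thesis by simp
  qed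
  ultimately show ?thesis
    by (simp add: ord.lowest_def)
qed

end

section \<open>The lexicographic order on exponents\<close>

definition lex_le :: "(nat \<Rightarrow> 'b::linorder) \<Rightarrow> (nat \<Rightarrow> 'b) \<Rightarrow> bool" where
  "lex_le f g \<longleftrightarrow> less_fun f g \<or> f = g"

lemma less_fun_total:
  fixes f g :: "nat \<Rightarrow> 'b::linorder"
  assumes "f \<noteq> g"
  shows "less_fun f g \<or> less_fun g f"
proof -
  obtain i0 where "f i0 \<noteq> g i0"
    using assms by auto
  define i where "i = (LEAST i. f i \<noteq> g i)"
  have fi: "f i \<noteq> g i"
    unfolding i_def by (rule LeastI[of _ i0]) fact
  have below: "\<forall>j<i. f j = g j"
    unfolding i_def using not_less_Least by blast
  show ?thesis
  proof (cases "f i < g i")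
    case True
    then show ?thesis
      using below unfolding less_fun_def by (intro disjI1 exI[of _ i]) simp
  next
    case False
    then have "g i < f i"
      using fi by simp
    then show ?thesis
      using below unfolding less_fun_def by (intro disjI2 exI[of _ i]) simp
  qed
qed

lemma linorder_lex_le: "class.linorder lex_le (less_fun :: (nat \<Rightarrow> 'b::linorder) \<Rightarrow> _)"
  unfolding class.linorder_def class.linorder_axioms_def lex_le_def
  using order_less_fun less_fun_total by auto

lemma less_fun_add_right:
  fixes a b c :: exponent
  assumes "less_fun a b"
  shows "less_fun (a + c) (b + c)"
proof -
  have "x < y \<Longrightarrow> x + z < y + z" for x y z :: "int \<times> int"
    by (cases x, cases y, cases z) auto
  with assms show ?thesis
    unfolding less_fun_def by (fastforce simp: fun_apply_simps)
qed

lemma add_linorder_lex: "add_linorder (lex_le :: exponent \<Rightarrow> _) less_fun"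
  by (intro add_linorder.intro linorder_lex_le add_linorder_axioms.intro)
     (auto simp: lex_le_def intro: less_fun_add_right)

lemma add_linorder_lex_dual: "add_linorder (\<lambda>a b. lex_le b (a :: exponent)) (\<lambda>a b. less_fun b a)"
  by (intro add_linorder.intro linorder.dual_linorder[OF linorder_lex_le] add_linorder_axioms.intro)
     (auto simp: lex_le_def intro: less_fun_add_right)

interpretation lex: add_linorder "lex_le :: exponent \<Rightarrow> _" less_fun
  by (rule add_linorder_lex)

interpretation lex_dual: add_linorder "\<lambda>a b. lex_le b (a :: exponent)" "\<lambda>a b. less_fun b a"
  by (rule add_linorder_lex_dual)

abbreviation lowest_exp :: "(exponent \<Rightarrow> 'k::zero) \<Rightarrow> exponent \<Rightarrow> bool" where
  "lowest_exp \<equiv> lex.lowest"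

abbreviation highest_exp :: "(exponent \<Rightarrow> 'k::zero) \<Rightarrow> exponent \<Rightarrow> bool" where
  "highest_exp \<equiv> lex_dual.lowest"

lemma lowest_highest_exp_le: "lowest_exp f p \<Longrightarrow> highest_exp f p' \<Longrightarrow> lex_le p p'"
  by (simp add: lex.lowest_def lex_dual.lowest_def)

lemma lowest_eq_highest_exp_supp:
  "lowest_exp f p \<Longrightarrow> highest_exp f p \<Longrightarrow> f r \<noteq> 0 \<Longrightarrow> r = p"
  unfolding lex.lowest_def lex_dual.lowest_def by (intro lex.order_antisym) auto

lemma less_fun_single: "a < b \<Longrightarrow> less_fun ((0 :: exponent)(i := a)) (0(i := b))"
  unfolding less_fun_def by (intro exI[of _ i]) (simp add: fun_apply_simps)

section \<open>Leading exponents of normal words\<close>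

lemma sum_list_map_concat: "(\<Sum>x\<leftarrow>concat xss. f x) = (\<Sum>xs\<leftarrow>xss. \<Sum>x\<leftarrow>xs. f x)"
  by (induction xss) simp_all

lemma sum_list_replicate_single:
  "sum_list (replicate k ((0 :: exponent)(i := (a, b)))) = 0(i := (int k * a, int k * b))"
  by (induction k) (simp_all add: single_add algebra_simps del: fun_upd_apply)

context gwa_tensor
begin

fun low_gen :: "gen \<Rightarrow> exponent" where
  "low_gen (Hg i) = 0(i := (1, 0))"
| "low_gen (Hig i) = 0(i := (-1, 0))"
| "low_gen (Xg i) = 0(i := (0, 1))"
| "low_gen (Yg i) = 0(i := (0, -1))"

fun high_gen :: "gen \<Rightarrow> exponent" where
  "high_gen (Yg i) = 0(i := (int d, -1))"
| "high_gen g = low_gen g"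

definition high_pair :: "int \<times> int \<Rightarrow> int \<times> int" where
  "high_pair v = (fst v + int d * max 0 (- snd v), snd v)"

lemma lowest_gen_image: "lowest_exp (gen_image g) (low_gen g)"
proof (cases g)
  case (Yg i)
  have "less_fun ((0 :: exponent)(i := (0, -1))) (0(i := (int d, -1)))"
    using d_pos by (intro less_fun_single) simp
  then show ?thesis
    unfolding Yg lex.lowest_def by (auto simp: lex_le_def delta_def fun_apply_simps less_fun_irrefl)
qed (simp_all add: lex.lowest_delta)

lemma highest_gen_image: "highest_exp (gen_image g) (high_gen g)"
proof (cases g)
  case (Yg i)
  have "less_fun ((0 :: exponent)(i := (0, -1))) (0(i := (int d, -1)))"
    using d_pos by (intro less_fun_single) simp
  then show ?thesis
    unfolding Yg lex_dual.lowest_def by (auto simp: lex_le_def delta_def fun_apply_simps less_fun_irrefl)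
qed (simp_all add: lex_dual.lowest_delta)

lemma lowest_word_image: "lowest_exp (word_image w) (\<Sum>g\<leftarrow>w. low_gen g)"
  by (induction w)
     (simp_all add: lex.lowest_delta lowest_tmul[OF add_linorder_lex] lowest_gen_image finite_supp_gen_image)

lemma highest_word_image: "highest_exp (word_image w) (\<Sum>g\<leftarrow>w. high_gen g)"
  by (induction w)
     (simp_all add: lex_dual.lowest_delta lowest_tmul[OF add_linorder_lex_dual] highest_gen_image
       finite_supp_gen_image)


lemma low_gen_block: "(\<Sum>g\<leftarrow>block i v. low_gen g) = 0(i := v)"
proof -
  obtain m k where v: "v = (m, k)" by force
  have "(\<Sum>g\<leftarrow>hword i m. low_gen g) = 0(i := (m, 0))"
    by (simp add: hword_def sum_list_replicate_single del: fun_upd_apply)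
  moreover have "(\<Sum>g\<leftarrow>xyword i k. low_gen g) = 0(i := (0, k))"
    by (simp add: xyword_def sum_list_replicate_single del: fun_upd_apply)
  ultimately show ?thesis
    by (simp add: v block_def single_add del: fun_upd_apply)
qed

lemma high_gen_block: "(\<Sum>g\<leftarrow>block i v. high_gen g) = 0(i := high_pair v)"
proof -
  obtain m k where v: "v = (m, k)" by force
  have "(\<Sum>g\<leftarrow>hword i m. high_gen g) = 0(i := (m, 0))"
    by (simp add: hword_def sum_list_replicate_single del: fun_upd_apply)
  moreover have "(\<Sum>g\<leftarrow>xyword i k. high_gen g) = 0(i := (int d * max 0 (- k), k))"
    by (simp add: xyword_def sum_list_replicate_single mult.commute del: fun_upd_apply)
  ultimately show ?thesis
    by (simp add: v block_def single_add high_pair_def del: fun_upd_apply)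
qed

lemma sum_list_normal_word:
  fixes F :: "gen \<Rightarrow> exponent"
  assumes e: "e \<in> normal_exps" and F: "\<And>i v. (\<Sum>g\<leftarrow>block i v. F g) = 0(i := \<phi> v)"
    and \<phi>: "\<phi> 0 = 0"
  shows "(\<Sum>g\<leftarrow>normal_word e. F g) = \<phi> \<circ> e"
proof
  fix x
  have "(\<Sum>g\<leftarrow>normal_word e. F g) = (\<Sum>j\<in>{1..n}. 0(j := \<phi> (e j)))"
    by (simp add: normal_word_def sum_list_map_concat o_def F
        sum_set_upt_conv_sum_list_nat[symmetric] atLeastLessThanSuc_atLeastAtMost
        del: fun_upd_apply upt_Suc)
  moreover have "(\<Sum>j\<in>{1..n}. 0(j := \<phi> (e j))) x = (\<phi> \<circ> e) x"
    using e \<phi> by (simp add: sum_fun_apply zero_fun_apply if_distrib[where f="\<lambda>f. f x"] cong: if_cong)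
       (auto simp: normal_exps_def)
  ultimately show "(\<Sum>g\<leftarrow>normal_word e. F g) x = (\<phi> \<circ> e) x"
    by simp
qed

lemma lowest_exp_normal_word: "e \<in> normal_exps \<Longrightarrow> lowest_exp (word_image (normal_word e)) e"
  using lowest_word_image[of "normal_word e"] sum_list_normal_word[of e low_gen id]
  by (simp add: low_gen_block)

lemma highest_exp_normal_word:
  "e \<in> normal_exps \<Longrightarrow> highest_exp (word_image (normal_word e)) (high_pair \<circ> e)"
  using highest_word_image[of "normal_word e"] sum_list_normal_word[of e high_gen high_pair]
  by (simp add: high_gen_block high_pair_def zero_prod_def)


lemma inj_high_pair: "inj high_pair"
  by (rule injI) (auto simp: high_pair_def prod_eq_iff)

end

section \<open>Units\<close>

lemma sum_extreme_exps_from_one_term: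
  fixes K :: "'a set" and c :: "'a \<Rightarrow> 'k::field" and F :: "'a \<Rightarrow> exponent \<Rightarrow> 'k"
  defines "S \<equiv> (\<Sum>\<kappa>\<in>K. scale (c \<kappa>) (F \<kappa>))"
  assumes K: "finite K" "K \<noteq> {}" and c_nonzero: "\<And>\<kappa>. \<kappa> \<in> K \<Longrightarrow> c \<kappa> \<noteq> 0"
    and L: "inj_on L K" "\<And>\<kappa>. \<kappa> \<in> K \<Longrightarrow> lowest_exp (F \<kappa>) (L \<kappa>)"
    and H: "inj_on H K" "\<And>\<kappa>. \<kappa> \<in> K \<Longrightarrow> highest_exp (F \<kappa>) (H \<kappa>)"
    and P: "lowest_exp S P" "highest_exp S P"
  shows "\<exists>\<kappa>0\<in>K. L \<kappa>0 = P \<and> H \<kappa>0 = P"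
proof -
  obtain \<kappa>0 where \<kappa>0: "\<kappa>0 \<in> K" "\<forall>\<kappa>\<in>K. lex_le (L \<kappa>0) (L \<kappa>)" "lowest_exp S (L \<kappa>0)"
    using lex.lowest_sum[of K L c F, OF K L(1) c_nonzero L(2)] unfolding S_def by blast
  obtain \<kappa>1 where \<kappa>1: "\<kappa>1 \<in> K" "highest_exp S (H \<kappa>1)"
    using lex_dual.lowest_sum[of K H c F, OF K H(1) c_nonzero H(2)] unfolding S_def by auto
  have L0: "L \<kappa>0 = P"
    using lex.lowest_unique[OF \<kappa>0(3) P(1)] .
  have H1: "H \<kappa>1 = P"
    using lex_dual.lowest_unique[OF \<kappa>1(2) P(2)] .
  have "lex_le (L \<kappa>1) (L \<kappa>0)"
    using lowest_highest_exp_le[OF L(2) H(2), OF \<kappa>1(1) \<kappa>1(1)] L0 H1 by simp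
  then have "L \<kappa>1 = L \<kappa>0"
    using \<kappa>0(2) \<kappa>1(1) by (intro lex.order_antisym) auto
  then have "\<kappa>1 = \<kappa>0"
    using L(1) \<kappa>0(1) \<kappa>1(1) by (auto dest: inj_onD)
  with \<kappa>0(1) L0 H1 show ?thesis
    by blast
qed

lemma sum_monomial_single_term:
  fixes K :: "'a set" and c :: "'a \<Rightarrow> 'k::field" and F :: "'a \<Rightarrow> exponent \<Rightarrow> 'k"
  defines "S \<equiv> (\<Sum>\<kappa>\<in>K. scale (c \<kappa>) (F \<kappa>))"
  assumes K: "finite K" and c_nonzero: "\<And>\<kappa>. \<kappa> \<in> K \<Longrightarrow> c \<kappa> \<noteq> 0"
    and L: "inj_on L K" "\<And>\<kappa>. \<kappa> \<in> K \<Longrightarrow> lowest_exp (F \<kappa>) (L \<kappa>)"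
    and \<kappa>0: "\<kappa>0 \<in> K" "lowest_exp (F \<kappa>0) P" "highest_exp (F \<kappa>0) P"
    and P: "lowest_exp S P" "highest_exp S P"
  shows "K = {\<kappa>0}"
proof (rule ccontr)
  assume "K \<noteq> {\<kappa>0}"
  then have "K - {\<kappa>0} \<noteq> {}"
    using \<kappa>0(1) by auto
  then obtain \<kappa>' where \<kappa>': "\<kappa>' \<in> K - {\<kappa>0}"
    and low': "lowest_exp (\<Sum>\<kappa>\<in>K - {\<kappa>0}. scale (c \<kappa>) (F \<kappa>)) (L \<kappa>')"
    using lex.lowest_sum[of "K - {\<kappa>0}" L c F, OF _ _ inj_on_subset[OF L(1)]] K c_nonzero L(2)
    by blast
  have "L \<kappa>0 = P"
    using lex.lowest_unique[OF L(2)[OF \<kappa>0(1)] \<kappa>0(2)] .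
  then have "L \<kappa>' \<noteq> P"
    using \<kappa>' \<kappa>0(1) L(1) by (auto dest: inj_onD)
  have "S = scale (c \<kappa>0) (F \<kappa>0) + (\<Sum>\<kappa>\<in>K - {\<kappa>0}. scale (c \<kappa>) (F \<kappa>))"
    unfolding S_def by (rule sum.remove[OF K \<kappa>0(1)])
  moreover have "S (L \<kappa>') = 0" "F \<kappa>0 (L \<kappa>') = 0"
    using lowest_eq_highest_exp_supp[OF P, of "L \<kappa>'"]
      lowest_eq_highest_exp_supp[OF \<kappa>0(2,3), of "L \<kappa>'"] \<open>L \<kappa>' \<noteq> P\<close> by auto
  ultimately have "(\<Sum>\<kappa>\<in>K - {\<kappa>0}. scale (c \<kappa>) (F \<kappa>)) (L \<kappa>') = 0"
    by (simp add: fun_apply_simps)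
  with low' show False
    by (simp add: lex.lowest_def)
qed

context gwa_tensor
begin

lemma unit_lowest_eq_highest:
  assumes fg: "tmul f g = delta 0" and f: "finite (supp f)" and g: "finite (supp g)"
    and a: "lowest_exp f a" and b: "highest_exp f b"
  shows "a = b"
proof (rule ccontr)
  assume "a \<noteq> b"
  with lowest_highest_exp_le[OF a b] have ab: "less_fun a b"
    by (simp add: lex_le_def)
  have "delta 0 \<noteq> (0 :: exponent \<Rightarrow> 'k)"
    by (metis delta_def zero_fun_apply zero_neq_one)
  then have "g \<noteq> 0"
    using fg by auto
  then obtain a' b' where a': "lowest_exp g a'" and b': "highest_exp g b'"
    using lex.lowest_exists lex_dual.lowest_exists g by metis
  have "lowest_exp (delta 0 :: exponent \<Rightarrow> 'k) (a + a')"
    using lowest_tmul[OF add_linorder_lex a f a'] fg by simp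
  then have "a + a' = 0"
    using lex.lowest_unique lex.lowest_delta by blast
  moreover have "highest_exp (delta 0 :: exponent \<Rightarrow> 'k) (b + b')"
    using lowest_tmul[OF add_linorder_lex_dual b f b'] fg by simp
  then have "b + b' = 0"
    using lex_dual.lowest_unique lex_dual.lowest_delta by blast
  moreover have "less_fun (a + a') (b + b')"
    using lex.less_add[OF ab lowest_highest_exp_le[OF a' b']] .
  ultimately show False
    by (simp add: less_fun_irrefl)
qed

lemma normal_form:
  assumes "ncelem n p"
  shows "\<exists>K c. finite K \<and> K \<subseteq> normal_exps \<and> (\<forall>e\<in>K. c e \<noteq> 0) \<and>
    p \<approx> (\<Sum>e\<in>K. scale (c e) (delta (normal_word e)))"
proof -
  obtain K c where K: "finite K" "K \<subseteq> normal_exps"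
    and p: "p \<approx> (\<Sum>e\<in>K. scale (c e) (delta (normal_word e)))"
    using in_normal_span_ncelem[OF assms] unfolding in_normal_span_def by blast
  have "(\<Sum>e\<in>K. scale (c e) (delta (normal_word e)))
      = (\<Sum>e\<in>{e\<in>K. c e \<noteq> 0}. scale (c e) (delta (normal_word e)))"
    using K(1) by (intro sum.mono_neutral_right) auto
  with K p show ?thesis
    by (intro exI[of _ "{e\<in>K. c e \<noteq> 0}"] exI[of _ c]) auto
qed

lemma tmul_rep_unit:
  assumes "ncelem n u" "ncelem n v" "ncmul u v \<approx> ncone"
  shows "tmul (rep u) (rep v) = delta 0"
proof -
  have "rep (ncmul u v) = rep (delta [])"
    using assms by (intro rep_Aeq) (auto simp: ncone_eq finite_supp_delta ncelem_finite_supp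
        intro: finite_supp_ncmul)
  then show ?thesis
    using assms by (simp add: rep_ncmul ncelem_finite_supp rep_delta)
qed

lemma unit_Aeq_normal_word:
  assumes u: "ncelem n u" and g: "finite (supp g)" and ug: "tmul (rep u) g = delta 0"
  shows "\<exists>c e. c \<noteq> 0 \<and> e \<in> normal_exps \<and> (\<forall>j. 0 \<le> snd (e j)) \<and> lowest_exp (rep u) e \<and>
    u \<approx> scale c (delta (normal_word e))"
proof -
  obtain K c where K: "finite K" "K \<subseteq> normal_exps" and c: "\<forall>e\<in>K. c e \<noteq> 0"
    and uK: "u \<approx> (\<Sum>e\<in>K. scale (c e) (delta (normal_word e)))"
    using normal_form[OF u] by blast
  have rep_u: "rep u = (\<Sum>e\<in>K. scale (c e) (word_image (normal_word e)))"
    using rep_Aeq[OF uK ncelem_finite_supp[OF u]]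
    by (simp add: rep_sum rep_scale rep_delta finite_supp_sum finite_supp_scale finite_supp_delta)
  have "rep u \<noteq> 0"
    using ug by (metis delta_def tmul_zero(1) zero_fun_apply zero_neq_one)
  then have "K \<noteq> {}"
    using rep_u by auto
  obtain a b where a: "lowest_exp (rep u) a" and b: "highest_exp (rep u) b"
    using lex.lowest_exists lex_dual.lowest_exists finite_supp_rep \<open>rep u \<noteq> 0\<close> by metis
  have "a = b"
    using unit_lowest_eq_highest[OF ug finite_supp_rep g a b] .
  have inj: "inj_on (\<lambda>e. high_pair \<circ> e) K"
    using inj_high_pair by (auto intro!: inj_onI simp: fun_eq_iff inj_eq)
  have low: "lowest_exp (word_image (normal_word e)) (id e)" if "e \<in> K" for e
    using lowest_exp_normal_word K(2) that by auto
  have high: "highest_exp (word_image (normal_word e)) (high_pair \<circ> e)" if "e \<in> K" for e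
    using highest_exp_normal_word K(2) that by auto
  obtain e where e: "e \<in> K" "e = a" "high_pair \<circ> e = a"
    using sum_extreme_exps_from_one_term[where K=K and c=c and F="\<lambda>e. word_image (normal_word e)"
        and L=id and H="\<lambda>e. high_pair \<circ> e" and P=a, OF K(1) \<open>K \<noteq> {}\<close> c[rule_format] inj_on_id low
        inj high] a b rep_u \<open>a = b\<close>
    by auto
  have "K = {e}"
    using sum_monomial_single_term[where K=K and c=c and F="\<lambda>e. word_image (normal_word e)" and L=id
        and P=a, OF K(1) c[rule_format] inj_on_id low e(1)] low[OF e(1)] high[OF e(1)] e a b rep_u \<open>a = b\<close>
    by auto
  have "0 \<le> snd (e j)" for j
    using fun_cong[OF e(3)[folded e(2)], of j] d_pos by (simp add: high_pair_def prod_eq_iff)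
  moreover have "u \<approx> scale (c e) (delta (normal_word e))"
    using uK \<open>K = {e}\<close> by simp
  ultimately show ?thesis
    using a e c K(2) by (intro exI[of _ "c e"] exI[of _ e]) auto
qed

lemma hpow_eq_delta: "hpow i m = delta (hword i m)"
  by (simp add: hpow_def hword_def ncvar_eq ncpow_delta)

lemma normal_word_hmono:
  assumes "\<forall>j. snd (e j) = 0"
  shows "delta (normal_word e) = hmono (\<lambda>j. fst (e j)) n"
proof -
  have hmono: "hmono m k = delta (concat (map (\<lambda>j. hword j (m j)) [1..<Suc k]))" for m k
    by (induction k) (simp_all add: ncone_eq hpow_eq_delta ncmul_delta)
  have "normal_word e = concat (map (\<lambda>j. hword j (fst (e j))) [1..<Suc n])"
    using assms by (simp add: normal_word_def block_def xyword_def del: upt_Suc)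
  then show ?thesis
    by (simp add: hmono del: upt_Suc)
qed

end

theorem lemma2p2:
  fixes n d :: nat and q :: "nat \<Rightarrow> 'k::field" and u :: "'k ncp"
  assumes "n > 0" and "d > 0"
    and "\<forall>i\<in>{1..n}. q i \<noteq> 0 \<and> q i ^ d \<noteq> 1"
    and "Aunit n d q u"
  shows "\<exists>\<gamma>::'k. \<exists>m::nat \<Rightarrow> int. \<gamma> \<noteq> 0 \<and> Aeq n d q u (ncsmul \<gamma> (hmono m n))"
proof -
  interpret gwa_tensor n d q
    using assms(2,3) by unfold_locales auto
  obtain v where u: "ncelem n u" and v: "ncelem n v"
    and uv: "ncmul u v \<approx> ncone" and vu: "ncmul v u \<approx> ncone"
    using assms(4) by (auto simp: Aunit_def)
  have uv_rep: "tmul (rep u) (rep v) = delta 0" and vu_rep: "tmul (rep v) (rep u) = delta 0"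
    using tmul_rep_unit u v uv vu by blast+
  obtain c e where c: "c \<noteq> 0" and e: "\<forall>j. 0 \<le> snd (e j)" "lowest_exp (rep u) e"
    and u_eq: "u \<approx> scale c (delta (normal_word e))"
    using unit_Aeq_normal_word[OF u finite_supp_rep uv_rep] by blast
  obtain e' where e': "\<forall>j. 0 \<le> snd (e' j)" "lowest_exp (rep v) e'"
    using unit_Aeq_normal_word[OF v finite_supp_rep vu_rep] by blast
  have "lowest_exp (delta 0 :: exponent \<Rightarrow> 'k) (e + e')"
    using lowest_tmul[OF add_linorder_lex e(2) finite_supp_rep e'(2)] uv_rep by simp
  then have "e + e' = 0"
    using lex.lowest_unique lex.lowest_delta by blast
  then have "\<forall>j. snd (e j) = 0"
    using e(1) e'(1) by (simp add: fun_eq_iff fun_apply_simps zero_prod_def prod_eq_iff)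
      (metis add_nonneg_eq_0_iff)
  then have "Aeq n d q u (ncsmul c (hmono (\<lambda>j. fst (e j)) n))"
    using u_eq by (simp add: normal_word_hmono ncsmul_eq)
  with c show ?thesis
    by blast
qed

end
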